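(* Let $(e_1^{(1)},e_1^{(2)}),(e_2^{(1)},e_2^{(2)}),\dots$ be i.i.d. real random pairs with mean zero, independently adapted to a filtration $\{\mathcal F_n\}$, let $\zeta_n^{(j)}=\sum_{i=1}^ne_i^{(j)}$ for $j=1,2$, and let $t$ be a stopping time with respect to $\{\mathcal F_n\}$. If $E|e_1^{(1)}|^{3/2}<\infty$, $E|e_1^{(2)}|^3<\infty$ and $Et^{3/2}<\infty$, then $E\zeta_t^{(1)}\zeta_t^{(2)}=Et\,Ee_1^{(1)}e_1^{(2)}$.
   Context: A sequence $\{e_n\}$ is independently adapted to $\{\mathcal F_n\}$ if for each $n\ge1$, $e_n$ is $\mathcal F_n$-measurable and independent of $\mathcal F_{n-1}$. *)

theory Defs
  imports "HOL-Probability.Probability"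
begin

definition indep_adapted ::
  "'a measure \<Rightarrow> (nat \<Rightarrow> 'a measure) \<Rightarrow> (nat \<Rightarrow> 'a \<Rightarrow> real \<times> real) \<Rightarrow> bool" where
  "indep_adapted M F e \<longleftrightarrow>
     (\<forall>n\<ge>1. e n \<in> borel_measurable (F n) \<and>
        prob_space.indep_set M (sets (F (n - 1)))
          {e n -` A \<inter> space M | A. A \<in> sets borel})"

definition psum :: "(nat \<Rightarrow> 'a \<Rightarrow> real) \<Rightarrow> nat \<Rightarrow> 'a \<Rightarrow> real" where
  "psum e n x = (\<Sum>i=1..n. e i x)"

end

theory Submission
  imports Defs
begin

(* Truncating at n gives the stopped sums S_n = zeta_(t min n).  The pair e_(n+1) is independent
   of F_n, hence of S_n and of the event {t > n}, so induction on n gives Wald's identity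
   E S_n^(1) S_n^(2) = E (t min n) E e^(1) e^(2) for the bounded stopping times t min n.
   To let n tend to infinity, split zeta_t = S_n + D_n, where D_n is the sum of the walk restarted
   at time n and stopped at t - n.  Two moment inequalities of Burkholder type,
     E |zeta_t^(1)|^(3/2) <= 2 E |e^(1)|^(3/2) E t   and   E |zeta_t^(2)|^3 <= K E t^(3/2),
   applied to the restarted walks give E |D_n^(1)|^(3/2) -> 0 and E |D_n^(2)|^3 -> 0, and Young's
   inequality |u w| <= d |u|^(3/2) + |w|^3 / d^2 makes the cross terms E D_n^(1) zeta_t^(2) and
   E S_n^(1) D_n^(2) vanish. *)

section \<open>Elementary inequalities\<close>

definition pow32 :: "real \<Rightarrow> real" where
  "pow32 z = sqrt \<bar>z\<bar> ^ 3"

definition signed_sqrt :: "real \<Rightarrow> real" where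
  "signed_sqrt z = sgn z * sqrt \<bar>z\<bar>"

lemma pow32_nonneg [simp]: "0 \<le> pow32 z"
  by (simp add: pow32_def)

lemma pow32_0 [simp]: "pow32 0 = 0"
  by (simp add: pow32_def)

lemma pow32_minus [simp]: "pow32 (- z) = pow32 z"
  by (simp add: pow32_def)

lemma pow32_mono: "0 \<le> a \<Longrightarrow> a \<le> b \<Longrightarrow> pow32 a \<le> pow32 b"
  by (simp add: pow32_def power_mono)

lemma pow32_eq_abs_mult_sqrt: "pow32 z = \<bar>z\<bar> * sqrt \<bar>z\<bar>"
  by (simp add: pow32_def power3_eq_cube)

lemma pow32_eq_powr: "pow32 z = \<bar>z\<bar> powr (3/2)"
proof (cases "z = 0")
  case False
  have "\<bar>z\<bar> powr (3/2) = (\<bar>z\<bar> powr (1/2)) powr 3"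
    by (simp add: powr_powr)
  also have "\<dots> = sqrt \<bar>z\<bar> ^ 3"
    using False by (simp add: powr_half_sqrt powr_realpow)
  finally show ?thesis
    by (simp add: pow32_def)
qed simp

lemma pow32_measurable [measurable]: "pow32 \<in> borel_measurable borel"
  unfolding pow32_def by measurable

lemma signed_sqrt_measurable [measurable]: "signed_sqrt \<in> borel_measurable borel"
  unfolding signed_sqrt_def by measurable

lemma power_le_one_add_power:
  fixes z :: real
  assumes "0 \<le> z" and "m \<le> n"
  shows "z ^ m \<le> 1 + z ^ n"
proof (cases "z \<le> 1")
  case True
  then have "z ^ m \<le> 1"
    using assms(1) by (simp add: power_le_one)
  then show ?thesis
    using assms(1) by (simp add: add_increasing2)
next
  case False
  then have "z ^ m \<le> z ^ n"
    using assms(2) by (intro power_increasing) auto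
  then show ?thesis
    by simp
qed

lemma abs_le_one_add_pow32: "\<bar>z\<bar> \<le> 1 + pow32 z"
  using power_le_one_add_power[of "sqrt \<bar>z\<bar>" 2 3] by (simp add: pow32_def)

lemma abs_signed_sqrt_le_one_add_pow32: "\<bar>signed_sqrt z\<bar> \<le> 1 + pow32 z"
proof -
  have "\<bar>signed_sqrt z\<bar> \<le> sqrt \<bar>z\<bar>"
    by (simp add: signed_sqrt_def abs_mult abs_sgn_eq)
  also have "\<dots> \<le> 1 + pow32 z"
    using power_le_one_add_power[of "sqrt \<bar>z\<bar>" 1 3] by (simp add: pow32_def)
  finally show ?thesis .
qed

(* The two sign cases of pow32_add_le_of_nonneg, in the variables a = sqrt x, b = sqrt |y| and
   w = sqrt |x + y|. *)

lemma cube_le_of_sq_eq_add_sq: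
  fixes a b w :: real
  assumes "0 \<le> a" "0 \<le> b" "0 \<le> w" and w: "w\<^sup>2 = a\<^sup>2 + b\<^sup>2"
  shows "w ^ 3 \<le> a ^ 3 + 3/2 * a * b\<^sup>2 + 2 * b ^ 3"
proof (rule power2_le_imp_le)
  have "(w ^ 3)\<^sup>2 = (a\<^sup>2 + b\<^sup>2) ^ 3"
    by (simp flip: w power_mult add: mult.commute)
  then have "(a ^ 3 + 3/2 * a * b\<^sup>2 + 2 * b ^ 3)\<^sup>2 - (w ^ 3)\<^sup>2
      = b ^ 3 * (a * ((2 * a - 3/16 * b)\<^sup>2 + 1527/256 * b\<^sup>2) + 3 * b ^ 3)"
    by (simp add: field_simps power2_eq_square power3_eq_cube)
  also have "\<dots> \<ge> 0"
    using assms by simp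
  finally show "(w ^ 3)\<^sup>2 \<le> (a ^ 3 + 3/2 * a * b\<^sup>2 + 2 * b ^ 3)\<^sup>2"
    by simp
qed (use assms in simp)

lemma cube_le_of_sq_eq_diff_sq:
  fixes a b w :: real
  assumes "0 \<le> a" "0 \<le> b" "0 \<le> w" and w: "w\<^sup>2 = \<bar>a\<^sup>2 - b\<^sup>2\<bar>"
  shows "w ^ 3 \<le> a ^ 3 - 3/2 * a * b\<^sup>2 + 2 * b ^ 3"
proof (cases "b \<le> a")
  case True
  define d where "d = a - b"
  have d: "0 \<le> d" "a = b + d"
    using True by (auto simp: d_def)
  have w2: "w\<^sup>2 = a\<^sup>2 - b\<^sup>2"
    using w True assms(2) by (simp add: power_mono)
  have w6: "(w ^ 3)\<^sup>2 = (a\<^sup>2 - b\<^sup>2) ^ 3"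
    by (simp flip: w2 power_mult add: mult.commute)
  have "(a ^ 3 - 3/2 * a * b\<^sup>2 + 2 * b ^ 3)\<^sup>2 - (w ^ 3)\<^sup>2
      = b ^ 3 * (9/4 * b ^ 3 + 9/2 * b\<^sup>2 * d + 45/4 * b * d\<^sup>2 + 4 * d ^ 3)"
    unfolding w6 d(2) by (simp add: field_simps power2_eq_square power3_eq_cube)
  also have "\<dots> \<ge> 0"
    using assms(2) d(1) by simp
  finally have "(w ^ 3)\<^sup>2 \<le> (a ^ 3 - 3/2 * a * b\<^sup>2 + 2 * b ^ 3)\<^sup>2"
    by simp
  moreover have "a ^ 3 - 3/2 * a * b\<^sup>2 + 2 * b ^ 3 = 3/2 * b ^ 3 + 3/2 * b\<^sup>2 * d + 3 * b * d\<^sup>2 + d ^ 3"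
    unfolding d(2) by (simp add: field_simps power2_eq_square power3_eq_cube)
  then have "0 \<le> a ^ 3 - 3/2 * a * b\<^sup>2 + 2 * b ^ 3"
    using assms(2) d(1) by simp
  ultimately show ?thesis
    by (rule power2_le_imp_le)
next
  case False
  define d where "d = b - a"
  have d: "0 \<le> d" "b = a + d"
    using False by (auto simp: d_def)
  have "a\<^sup>2 \<le> b\<^sup>2"
    using False assms(1) by (simp add: power_mono)
  then have "w\<^sup>2 \<le> b\<^sup>2"
    using w by simp
  then have "w \<le> b"
    using assms(2) by (rule power2_le_imp_le)
  then have "w ^ 3 \<le> b ^ 3"
    using assms(3) by (rule power_mono)
  moreover have "a ^ 3 - 3/2 * a * b\<^sup>2 + 2 * b ^ 3 - b ^ 3 = 1/2 * a ^ 3 + 3/2 * a * d\<^sup>2 + d ^ 3"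
    unfolding d(2) by (simp add: algebra_simps power2_eq_square power3_eq_cube)
  moreover have "0 \<le> 1/2 * a ^ 3 + 3/2 * a * d\<^sup>2 + d ^ 3"
    using assms(1) d(1) by simp
  ultimately show ?thesis
    by linarith
qed

lemma pow32_add_le_of_nonneg:
  fixes x y :: real
  assumes x: "0 \<le> x"
  shows "pow32 (x + y) \<le> pow32 x + 3/2 * sqrt x * y + 2 * pow32 y"
proof -
  define a b w where "a = sqrt x" and "b = sqrt \<bar>y\<bar>" and "w = sqrt \<bar>x + y\<bar>"
  have nonneg: "0 \<le> a" "0 \<le> b" "0 \<le> w"
    using x by (simp_all add: a_def b_def w_def)
  have sq: "x = a\<^sup>2" "\<bar>y\<bar> = b\<^sup>2" "\<bar>x + y\<bar> = w\<^sup>2"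
    using x by (simp_all add: a_def b_def w_def)
  have pow32: "pow32 (x + y) = w ^ 3" "pow32 x = a ^ 3" "pow32 y = b ^ 3"
    using x by (simp_all add: pow32_def a_def b_def w_def)
  show ?thesis
  proof (cases "0 \<le> y")
    case True
    then have y: "y = b\<^sup>2"
      using sq(2) by simp
    then have "w\<^sup>2 = a\<^sup>2 + b\<^sup>2"
      using sq by simp
    moreover have "3/2 * sqrt x * y = 3/2 * a * b\<^sup>2"
      by (simp add: a_def y)
    ultimately show ?thesis
      using cube_le_of_sq_eq_add_sq[OF nonneg] pow32 by linarith
  next
    case False
    then have y: "y = - b\<^sup>2"
      using sq(2) by simp
    then have "w\<^sup>2 = \<bar>a\<^sup>2 - b\<^sup>2\<bar>"
      using sq by simp
    moreover have "3/2 * sqrt x * y = - 3/2 * a * b\<^sup>2"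
      by (simp add: a_def y)
    ultimately show ?thesis
      using cube_le_of_sq_eq_diff_sq[OF nonneg] pow32 by linarith
  qed
qed

(* A second-order Taylor bound: 3/2 * signed_sqrt is the derivative of pow32.  The same holds for
   abs_add_cube_le below, the derivative of |z|^3 being 3 z |z|. *)

lemma pow32_add_le: "pow32 (x + y) \<le> pow32 x + 3/2 * signed_sqrt x * y + 2 * pow32 y"
proof (cases "0 \<le> x")
  case True
  then show ?thesis
    using pow32_add_le_of_nonneg[OF True, of y] by (cases "x = 0") (simp_all add: signed_sqrt_def)
next
  case False
  then have "pow32 (- x + - y) \<le> pow32 (- x) + 3/2 * sqrt (- x) * (- y) + 2 * pow32 (- y)"
    by (intro pow32_add_le_of_nonneg) simp
  moreover have "pow32 (- x + - y) = pow32 (x + y)"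
    using pow32_minus[of "x + y"] by simp
  moreover have "signed_sqrt x = - sqrt (- x)"
    using False by (simp add: signed_sqrt_def)
  ultimately show ?thesis
    by simp
qed

lemma abs_add_cube_le_of_nonneg:
  fixes x y :: real
  assumes "0 \<le> x"
  shows "\<bar>x + y\<bar> ^ 3 \<le> x ^ 3 + 3 * x\<^sup>2 * y + 3 * x * y\<^sup>2 + 3 * \<bar>y\<bar> ^ 3"
proof -
  have expand: "(x + y) ^ 3 = x ^ 3 + 3 * x\<^sup>2 * y + 3 * x * y\<^sup>2 + y ^ 3"
    by (simp add: power3_eq_cube power2_eq_square algebra_simps)
  show ?thesis
  proof (cases "0 \<le> x + y")
    case True
    have "y ^ 3 \<le> \<bar>y\<bar> ^ 3" "0 \<le> \<bar>y\<bar> ^ 3" "\<bar>x + y\<bar> ^ 3 = (x + y) ^ 3"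
      using True by (simp_all add: power_mono_odd)
    then show ?thesis
      using expand by linarith
  next
    case False
    then have "y < 0"
      using assms by simp
    then have "y ^ 3 \<le> (x + y) ^ 3" "y ^ 3 < 0" "\<bar>y\<bar> ^ 3 = - (y ^ 3)"
      using assms by (simp add: power_mono_odd, simp add: power_less_zero_eq, simp add: power3_eq_cube)
    moreover have "\<bar>x + y\<bar> ^ 3 = - ((x + y) ^ 3)"
      using False by (simp add: abs_if power_minus_odd del: minus_add_distrib)
    ultimately show ?thesis
      using expand by linarith
  qed
qed

lemma abs_add_cube_le:
  fixes x y :: real
  shows "\<bar>x + y\<bar> ^ 3 \<le> \<bar>x\<bar> ^ 3 + 3 * x * \<bar>x\<bar> * y + 3 * \<bar>x\<bar> * y\<^sup>2 + 3 * \<bar>y\<bar> ^ 3"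
proof (cases "0 \<le> x")
  case True
  then show ?thesis
    using abs_add_cube_le_of_nonneg[OF True, of y] by (simp add: power2_eq_square power3_eq_cube)
next
  case False
  have "\<bar>- x + - y\<bar> ^ 3 \<le> (- x) ^ 3 + 3 * (- x)\<^sup>2 * (- y) + 3 * (- x) * (- y)\<^sup>2 + 3 * \<bar>- y\<bar> ^ 3"
    by (rule abs_add_cube_le_of_nonneg) (use False in linarith)
  moreover have "\<bar>- x + - y\<bar> = \<bar>x + y\<bar>"
    by (metis abs_minus_cancel minus_add_distrib)
  moreover have "- x = \<bar>x\<bar>"
    using False by simp
  moreover have "3 * \<bar>x\<bar>\<^sup>2 * (- y) = 3 * x * \<bar>x\<bar> * y"
    using False by (simp add: power2_eq_square)
  ultimately show ?thesis
    by (simp only: abs_minus_cancel power2_minus)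
qed

lemma abs_add_cube_le_4: "\<bar>x + y\<bar> ^ 3 \<le> 4 * (\<bar>x\<bar> ^ 3 + \<bar>y\<bar> ^ 3)" for x y :: real
proof -
  have "\<bar>x + y\<bar> ^ 3 \<le> (\<bar>x\<bar> + \<bar>y\<bar>) ^ 3"
    by (simp add: power_mono abs_triangle_ineq)
  moreover have "4 * (\<bar>x\<bar> ^ 3 + \<bar>y\<bar> ^ 3) - (\<bar>x\<bar> + \<bar>y\<bar>) ^ 3 = 3 * (\<bar>x\<bar> + \<bar>y\<bar>) * (\<bar>x\<bar> - \<bar>y\<bar>)\<^sup>2"
    by (simp add: power2_eq_square power3_eq_cube algebra_simps)
  moreover have "0 \<le> 3 * (\<bar>x\<bar> + \<bar>y\<bar>) * (\<bar>x\<bar> - \<bar>y\<bar>)\<^sup>2"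
    by simp
  ultimately show ?thesis
    by linarith
qed

lemma abs_mult_le_young:
  fixes u w d :: real
  assumes d: "0 < d"
  shows "\<bar>u * w\<bar> \<le> d * pow32 u + \<bar>w\<bar> ^ 3 / d\<^sup>2"
proof (cases "\<bar>w\<bar> \<le> d * sqrt \<bar>u\<bar>")
  case True
  then have "\<bar>u\<bar> * \<bar>w\<bar> \<le> \<bar>u\<bar> * (d * sqrt \<bar>u\<bar>)"
    by (intro mult_left_mono) auto
  then have "\<bar>u * w\<bar> \<le> d * pow32 u"
    by (simp add: pow32_eq_abs_mult_sqrt abs_mult algebra_simps)
  moreover have "0 \<le> \<bar>w\<bar> ^ 3 / d\<^sup>2"
    by simp
  ultimately show ?thesis
    by linarith
next
  case False
  then have "sqrt \<bar>u\<bar> \<le> \<bar>w\<bar> / d"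
    using d by (simp add: field_simps)
  then have "(sqrt \<bar>u\<bar>)\<^sup>2 \<le> (\<bar>w\<bar> / d)\<^sup>2"
    by (intro power_mono) auto
  then have "\<bar>u\<bar> * \<bar>w\<bar> \<le> \<bar>w\<bar>\<^sup>2 / d\<^sup>2 * \<bar>w\<bar>"
    by (intro mult_right_mono) (auto simp: power_divide)
  also have "\<dots> = \<bar>w\<bar> ^ 3 / d\<^sup>2"
    by (simp add: power2_eq_square power3_eq_cube)
  finally show ?thesis
    using d by (simp add: abs_mult add_increasing)
qed

lemma abs_le_sqrt_increment:
  fixes z :: real
  shows "\<bar>z\<bar> \<le> (sqrt (Suc k) - sqrt k) * z\<^sup>2 + 2 * sqrt (Suc k)"
proof -
  define a b where "a = sqrt (Suc k) - sqrt k" and "b = sqrt (Suc k) + sqrt k"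
  have "0 < a" "b \<le> 2 * sqrt (Suc k)"
    by (simp_all add: a_def b_def)
  have "a * b = 1"
    by (simp add: a_def b_def algebra_simps)
  show ?thesis
  proof (cases "\<bar>z\<bar> \<le> b")
    case True
    then show ?thesis
      using \<open>0 < a\<close> \<open>b \<le> 2 * sqrt (Suc k)\<close> by (simp add: a_def[symmetric] add_increasing)
  next
    case False
    then have "1 \<le> a * \<bar>z\<bar>"
      using \<open>0 < a\<close> \<open>a * b = 1\<close> by (metis less_eq_real_def mult_left_mono not_le)
    then have "1 * \<bar>z\<bar> \<le> (a * \<bar>z\<bar>) * \<bar>z\<bar>"
      by (rule mult_right_mono) simp
    then have "\<bar>z\<bar> \<le> a * z\<^sup>2"
      by (simp add: power2_eq_square mult.assoc abs_mult_self)
    moreover have "0 \<le> sqrt (Suc k)"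
      by simp
    ultimately show ?thesis
      unfolding a_def by linarith
  qed
qed

section \<open>Limits and integrals\<close>

lemma tendsto_zero_if_eventually_bounded:
  fixes x :: "nat \<Rightarrow> real" and g :: "real \<Rightarrow> real"
  assumes bound: "\<And>e. 0 < e \<Longrightarrow> eventually (\<lambda>n. \<bar>x n\<bar> \<le> g e) sequentially"
    and g: "(g \<longlongrightarrow> 0) (at_right 0)"
  shows "x \<longlonglongrightarrow> 0"
proof (rule LIMSEQ_I)
  fix r :: real
  assume "0 < r"
  with g have "eventually (\<lambda>e. g e < r) (at_right 0)"
    by (rule order_tendstoD)
  then obtain b where "0 < b" and b: "\<And>e. 0 < e \<Longrightarrow> e < b \<Longrightarrow> g e < r"
    by (auto simp: eventually_at_right_field)
  obtain N where N: "\<And>n. N \<le> n \<Longrightarrow> \<bar>x n\<bar> \<le> g (b / 2)"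
    using bound[of "b / 2"] \<open>0 < b\<close> by (auto simp: eventually_sequentially)
  have "\<bar>x n\<bar> < r" if "N \<le> n" for n
    using N[OF that] b[of "b / 2"] \<open>0 < b\<close> by simp
  then show "\<exists>N. \<forall>n\<ge>N. norm (x n - 0) < r"
    by auto
qed

lemma young_bound_tendsto_zero_left:
  fixes x a b :: "nat \<Rightarrow> real"
  assumes bound: "\<And>d n. 0 < d \<Longrightarrow> \<bar>x n\<bar> \<le> d * a n + b n / d\<^sup>2"
    and a: "a \<longlonglongrightarrow> 0" and b: "\<And>n. b n \<le> B"
  shows "x \<longlonglongrightarrow> 0"
proof (rule tendsto_zero_if_eventually_bounded)
  fix e :: real
  assume e: "0 < e"
  have "eventually (\<lambda>n. a n < e\<^sup>2) sequentially"
    using order_tendstoD(2)[OF a] e by simp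
  then show "eventually (\<lambda>n. \<bar>x n\<bar> \<le> e + B * e\<^sup>2) sequentially"
  proof (rule eventually_mono)
    fix n
    assume "a n < e\<^sup>2"
    then have "1 / e * a n \<le> e" and "b n / (1 / e)\<^sup>2 \<le> B * e\<^sup>2"
      using e b[of n] by (simp_all add: field_simps power2_eq_square)
    then show "\<bar>x n\<bar> \<le> e + B * e\<^sup>2"
      using bound[of "1 / e" n] e by simp
  qed
qed (auto intro!: tendsto_eq_intros)

lemma young_bound_tendsto_zero_right:
  fixes x a b :: "nat \<Rightarrow> real"
  assumes bound: "\<And>d n. 0 < d \<Longrightarrow> \<bar>x n\<bar> \<le> d * a n + b n / d\<^sup>2"
    and a: "\<And>n. a n \<le> B" and b: "b \<longlonglongrightarrow> 0"
  shows "x \<longlonglongrightarrow> 0"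
proof (rule tendsto_zero_if_eventually_bounded)
  fix e :: real
  assume e: "0 < e"
  have "eventually (\<lambda>n. b n < e ^ 3) sequentially"
    using order_tendstoD(2)[OF b] e by simp
  then show "eventually (\<lambda>n. \<bar>x n\<bar> \<le> e * B + e) sequentially"
  proof (rule eventually_mono)
    fix n
    assume "b n < e ^ 3"
    then have "e * a n \<le> e * B" and "b n / e\<^sup>2 \<le> e"
      using e a[of n] by (simp_all add: field_simps power2_eq_square power3_eq_cube)
    then show "\<bar>x n\<bar> \<le> e * B + e"
      using bound[OF e, of n] by linarith
  qed
qed (auto intro!: tendsto_eq_intros)

lemma tendsto_zero_if_nonneg_le:
  fixes a b :: "nat \<Rightarrow> real"
  assumes "\<And>n. 0 \<le> a n" and "\<And>n. a n \<le> b n" and "b \<longlonglongrightarrow> 0"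
  shows "a \<longlonglongrightarrow> 0"
  by (rule tendsto_sandwich[of "\<lambda>_. 0" a sequentially b]) (use assms in auto)

lemma (in finite_measure) integrable_of_integrable_pow32:
  fixes f :: "'a \<Rightarrow> real"
  assumes "f \<in> borel_measurable M" and "integrable M (\<lambda>x. pow32 (f x))"
  shows "integrable M f"
proof (rule Bochner_Integration.integrable_bound)
  show "integrable M (\<lambda>x. 1 + pow32 (f x))"
    using assms(2) by simp
  show "AE x in M. norm (f x) \<le> norm (1 + pow32 (f x))"
    using abs_le_one_add_pow32 by (simp add: add_nonneg_nonneg)
qed (use assms(1) in simp)

lemma (in finite_measure) integrable_abs_power_le:
  fixes f :: "'a \<Rightarrow> real"
  assumes "f \<in> borel_measurable M" and "integrable M (\<lambda>x. \<bar>f x\<bar> ^ n)" and "m \<le> n"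
  shows "integrable M (\<lambda>x. \<bar>f x\<bar> ^ m)"
proof (rule Bochner_Integration.integrable_bound)
  show "integrable M (\<lambda>x. 1 + \<bar>f x\<bar> ^ n)"
    using assms(2) by simp
  show "AE x in M. norm (\<bar>f x\<bar> ^ m) \<le> norm (1 + \<bar>f x\<bar> ^ n)"
    using power_le_one_add_power[OF abs_ge_zero assms(3)] by simp
qed (use assms(1) in simp)

lemma (in finite_measure) integrable_lower_powers_of_cube:
  fixes f :: "'a \<Rightarrow> real"
  assumes f: "f \<in> borel_measurable M" and cube: "integrable M (\<lambda>x. \<bar>f x\<bar> ^ 3)"
  shows "integrable M f" and "integrable M (\<lambda>x. (f x)\<^sup>2)" and "integrable M (\<lambda>x. f x * \<bar>f x\<bar>)"
proof -
  show "integrable M f"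
    using integrable_abs_power_le[OF f cube, of 1] integrable_abs_iff[OF f] by simp
  show sq: "integrable M (\<lambda>x. (f x)\<^sup>2)"
    using integrable_abs_power_le[OF f cube, of 2] by simp
  show "integrable M (\<lambda>x. f x * \<bar>f x\<bar>)"
    by (rule Bochner_Integration.integrable_bound[OF sq]) (use f in \<open>auto simp: abs_mult power2_eq_square\<close>)
qed

lemma integrable_mult_of_pow32_cube:
  fixes f g :: "'a \<Rightarrow> real"
  assumes "f \<in> borel_measurable M" "g \<in> borel_measurable M"
    and "integrable M (\<lambda>x. pow32 (f x))" "integrable M (\<lambda>x. \<bar>g x\<bar> ^ 3)"
  shows "integrable M (\<lambda>x. f x * g x)"
proof (rule Bochner_Integration.integrable_bound)
  show "integrable M (\<lambda>x. pow32 (f x) + \<bar>g x\<bar> ^ 3)"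
    using assms by simp
  show "AE x in M. norm (f x * g x) \<le> norm (pow32 (f x) + \<bar>g x\<bar> ^ 3)"
    using abs_mult_le_young[of 1] by simp
qed (use assms in measurable)

lemma abs_integral_mult_le_young:
  fixes f g :: "'a \<Rightarrow> real"
  assumes "f \<in> borel_measurable M" "g \<in> borel_measurable M"
    and "integrable M (\<lambda>x. pow32 (f x))" "integrable M (\<lambda>x. \<bar>g x\<bar> ^ 3)" and "0 < d"
  shows "\<bar>\<integral>x. f x * g x \<partial>M\<bar> \<le> d * (\<integral>x. pow32 (f x) \<partial>M) + (\<integral>x. \<bar>g x\<bar> ^ 3 \<partial>M) / d\<^sup>2"
proof -
  have "\<bar>\<integral>x. f x * g x \<partial>M\<bar> \<le> (\<integral>x. \<bar>f x * g x\<bar> \<partial>M)"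
    by (rule integral_abs_bound)
  also have "\<dots> \<le> (\<integral>x. d * pow32 (f x) + \<bar>g x\<bar> ^ 3 / d\<^sup>2 \<partial>M)"
    using assms integrable_mult_of_pow32_cube[OF assms(1-4)]
    by (intro integral_mono abs_mult_le_young) auto
  also have "\<dots> = d * (\<integral>x. pow32 (f x) \<partial>M) + (\<integral>x. \<bar>g x\<bar> ^ 3 \<partial>M) / d\<^sup>2"
    using assms by simp
  finally show ?thesis .
qed

lemma tendsto_integral_mult_zero:
  fixes f g :: "nat \<Rightarrow> 'a \<Rightarrow> real"
  assumes "\<And>n. f n \<in> borel_measurable M" "\<And>n. g n \<in> borel_measurable M"
    and "\<And>n. integrable M (\<lambda>x. pow32 (f n x))" "\<And>n. integrable M (\<lambda>x. \<bar>g n x\<bar> ^ 3)"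
    and "(\<lambda>n. \<integral>x. pow32 (f n x) \<partial>M) \<longlonglongrightarrow> 0 \<and> (\<forall>n. (\<integral>x. \<bar>g n x\<bar> ^ 3 \<partial>M) \<le> B) \<or>
         (\<forall>n. (\<integral>x. pow32 (f n x) \<partial>M) \<le> B) \<and> (\<lambda>n. \<integral>x. \<bar>g n x\<bar> ^ 3 \<partial>M) \<longlonglongrightarrow> 0"
  shows "(\<lambda>n. \<integral>x. f n x * g n x \<partial>M) \<longlonglongrightarrow> 0"
proof -
  have bound: "\<bar>\<integral>x. f n x * g n x \<partial>M\<bar> \<le> d * (\<integral>x. pow32 (f n x) \<partial>M) + (\<integral>x. \<bar>g n x\<bar> ^ 3 \<partial>M) / d\<^sup>2"
    if "0 < d" for d n
    using assms(1-4) that by (rule abs_integral_mult_le_young)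
  show ?thesis
    using assms(5)
    by (auto intro: young_bound_tendsto_zero_left[OF bound] young_bound_tendsto_zero_right[OF bound])
qed

lemma fatou_eventually_eq:
  fixes u :: "nat \<Rightarrow> 'a \<Rightarrow> real"
  assumes u: "\<And>n. integrable M (u n)" "\<And>n x. 0 \<le> u n x"
    and eq: "\<And>x. x \<in> space M \<Longrightarrow> eventually (\<lambda>n. u n x = f x) sequentially"
    and bound: "\<And>n. integral\<^sup>L M (u n) \<le> B"
  shows "integrable M f" and "integral\<^sup>L M f \<le> B"
proof -
  have f_nonneg: "0 \<le> f x" if x: "x \<in> space M" for x
  proof -
    obtain n where "u n x = f x"
      using eq[OF x] unfolding eventually_sequentially by (metis order_refl)
    then show ?thesis
      using u(2)[of n x] by simp
  qed
  have f_measurable: "f \<in> borel_measurable M"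
    by (rule borel_measurable_LIMSEQ_real[where u=u]) (use u(1) eq in \<open>auto intro: tendsto_eventually\<close>)
  have B_nonneg: "0 \<le> B"
    using bound[of 0] integral_nonneg_AE[of "u 0" M] u(2) by (meson AE_I2 order_trans)
  have liminf_eq: "liminf (\<lambda>n. ennreal (u n x)) = ennreal (f x)" if "x \<in> space M" for x
  proof (rule lim_imp_Liminf)
    show "((\<lambda>n. ennreal (u n x)) \<longlongrightarrow> ennreal (f x)) sequentially"
      by (rule tendsto_eventually) (use eq[OF that] in \<open>auto elim: eventually_mono\<close>)
  qed simp
  have "(\<integral>\<^sup>+ x. ennreal (f x) \<partial>M) = (\<integral>\<^sup>+ x. liminf (\<lambda>n. ennreal (u n x)) \<partial>M)"
    by (rule nn_integral_cong) (simp add: liminf_eq)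
  also have "\<dots> \<le> liminf (\<lambda>n. \<integral>\<^sup>+ x. ennreal (u n x) \<partial>M)"
    by (rule nn_integral_liminf) (use u(1) in auto)
  also have "\<dots> \<le> ennreal B"
  proof (rule Liminf_le)
    have "(\<integral>\<^sup>+ x. ennreal (u n x) \<partial>M) = ennreal (integral\<^sup>L M (u n))" for n
      by (rule nn_integral_eq_integral[OF u(1)]) (simp add: u(2))
    then show "\<forall>\<^sub>F n in sequentially. (\<integral>\<^sup>+ x. ennreal (u n x) \<partial>M) \<le> ennreal B"
      using bound by (simp add: ennreal_leI)
  qed simp
  finally have nn_bound: "(\<integral>\<^sup>+ x. ennreal (f x) \<partial>M) \<le> ennreal B" .
  show f_integrable: "integrable M f"
    by (rule integrableI_nonneg[OF f_measurable])
      (use f_nonneg nn_bound in \<open>auto intro: AE_I2 simp: top_unique le_less_trans\<close>)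
  have "ennreal (integral\<^sup>L M f) \<le> ennreal B"
    using nn_bound nn_integral_eq_integral[OF f_integrable] f_nonneg by (simp add: AE_I2)
  then show "integral\<^sup>L M f \<le> B"
    using B_nonneg by (simp add: ennreal_le_iff)
qed

lemma tendsto_integral_tail_zero:
  fixes f :: "nat \<Rightarrow> real" and T :: "'a \<Rightarrow> nat"
  assumes f: "mono f" "f 0 = 0"
    and T: "T \<in> measurable M (count_space UNIV)" and int: "integrable M (\<lambda>x. f (T x))"
  shows "(\<lambda>n. \<integral>x. f (T x - n) \<partial>M) \<longlonglongrightarrow> 0"
proof -
  have "(\<lambda>n. \<integral>x. f (T x - n) \<partial>M) \<longlonglongrightarrow> (\<integral>x. 0 \<partial>M)"
  proof (rule integral_dominated_convergence[OF _ _ int])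
    show "(\<lambda>x. f (T x - n)) \<in> borel_measurable M" for n
      using T by measurable
    have "(\<lambda>n. f (T x - n)) \<longlonglongrightarrow> 0" for x
      using f(2) by (intro tendsto_eventually eventually_sequentiallyI[of "T x"]) simp
    then show "AE x in M. (\<lambda>n. f (T x - n)) \<longlonglongrightarrow> 0"
      by simp
    show "AE x in M. norm (f (T x - n)) \<le> f (T x)" for n
      using f monoD[OF f(1), of 0] monoD[OF f(1), of "T _ - n" "T _"] by (intro AE_I2) auto
  qed simp
  then show ?thesis
    by simp
qed

lemma (in prob_space) indep_var_of_indep_set:
  fixes Y :: "'a \<Rightarrow> real" and Z :: "'a \<Rightarrow> 'b::topological_space" and f :: "'b \<Rightarrow> real"
  assumes indep: "indep_set (sets N) {Z -` A \<inter> space M | A. A \<in> sets borel}"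
    and N: "sets N \<subseteq> sets M" "space N = space M"
    and measurable: "Y \<in> borel_measurable N" "Z \<in> borel_measurable M" "f \<in> borel_measurable borel"
  shows "indep_var borel Y borel (\<lambda>x. f (Z x))"
  unfolding indep_var_def indep_vars_def2
proof (intro conjI ballI)
  have "Y \<in> borel_measurable M"
    using measurable(1) N unfolding measurable_def by auto
  then show "random_variable (case_bool borel borel i) (case_bool Y (\<lambda>x. f (Z x)) i)" for i
    using measurable by (cases i) auto
  show "indep_sets (\<lambda>i. {case_bool Y (\<lambda>x. f (Z x)) i -` A \<inter> space M |A. A \<in> sets (case_bool borel borel i)}) UNIV"
  proof (rule indep_sets_mono_sets[OF indep[unfolded indep_set_def]])
    fix i :: bool
    have "f -` A \<in> sets borel" if "A \<in> sets borel" for A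
      using measurable_sets[OF measurable(3) that] by simp
    then show "{case_bool Y (\<lambda>x. f (Z x)) i -` A \<inter> space M |A. A \<in> sets (case_bool borel borel i)}
        \<subseteq> case_bool (sets N) {Z -` A \<inter> space M |A. A \<in> sets borel} i"
      using measurable_sets[OF measurable(1)] N(2) by (cases i) (auto simp: vimage_def)
  qed
qed

lemma psum_split_at: "psum X T x = psum X (min T n) x + psum (\<lambda>j. X (n + j)) (T - n) x"
proof (cases "T \<le> n")
  case False
  then obtain r where r: "T = n + r"
    by (metis le_add_diff_inverse nat_le_linear)
  have "psum X T x = (\<Sum>j=1..n. X j x) + (\<Sum>j=n+1..n+r. X j x)"
    unfolding psum_def r by (rule sum.ub_add_nat) simp
  also have "(\<Sum>j=n+1..n+r. X j x) = (\<Sum>j=1..r. X (n + j) x)"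
    using sum.shift_bounds_cl_nat_ivl[of "\<lambda>j. X j x" 1 n r] by (simp add: add.commute)
  finally show ?thesis
    using False r by (simp add: psum_def)
qed (simp add: psum_def)

lemma borel_measurable_psum:
  assumes "\<And>j. 1 \<le> j \<Longrightarrow> X j \<in> borel_measurable M"
  shows "psum X n \<in> borel_measurable M"
  unfolding psum_def[abs_def] using assms by (intro borel_measurable_sum) auto

lemma borel_measurable_psum_stopped:
  assumes "\<And>j. 1 \<le> j \<Longrightarrow> X j \<in> borel_measurable M" and "T \<in> measurable M (count_space UNIV)"
  shows "(\<lambda>x. psum X (T x) x) \<in> borel_measurable M"
  using borel_measurable_psum[OF assms(1)] assms(2) by (rule measurable_compose_countable)

section \<open>Stopped sums of an independently adapted i.i.d. sequence\<close>

locale iid_adapted_walk = prob_space M + filtration "space M" F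
  for M :: "'a measure" and F :: "nat \<Rightarrow> 'a measure" +
  fixes P :: "nat \<Rightarrow> 'a \<Rightarrow> real \<times> real" and \<tau> :: "'a \<Rightarrow> nat"
  assumes sets_F_subset: "\<And>n. sets (F n) \<subseteq> sets M"
    and adapted: "indep_adapted M F P"
    and identically_distributed: "\<And>i. 1 \<le> i \<Longrightarrow> distr M borel (P i) = distr M borel (P 1)"
    and stopping: "stopping_time F \<tau>"
begin

lemma measurable_from_F: "f \<in> measurable (F n) N \<Longrightarrow> f \<in> measurable M N"
  by (rule measurable_from_subalg)
    (use space_F[of n] sets_F_subset[of n] in \<open>simp add: subalgebra_def\<close>)

lemma measurable_F_mono: "m \<le> n \<Longrightarrow> f \<in> measurable (F m) N \<Longrightarrow> f \<in> measurable (F n) N"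
  by (rule measurable_from_subalg)
    (use space_F[of m] space_F[of n] sets_F_mono[of m n] in \<open>simp add: subalgebra_def\<close>)

lemma P_measurable: "1 \<le> n \<Longrightarrow> P n \<in> borel_measurable (F n)"
  using adapted by (simp add: indep_adapted_def)

lemma P_measurable_M: "1 \<le> n \<Longrightarrow> P n \<in> borel_measurable M"
  using P_measurable by (rule measurable_from_F)

lemma P_indep_past: "indep_set (sets (F n)) {P (Suc n) -` A \<inter> space M | A. A \<in> sets borel}"
  using adapted[unfolded indep_adapted_def, rule_format, of "Suc n"] by simp

lemma tau_measurable [measurable]: "\<tau> \<in> measurable M (count_space UNIV)"
proof -
  have "\<tau> \<in> borel_measurable M"
    using stopping sets_F_subset space_F by (rule measurable_stopping_time)
  moreover have "measurable M borel = measurable M (count_space UNIV :: nat measure)"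
    by (rule measurable_cong_sets[OF refl sets_borel_eq_count_space])
  ultimately show ?thesis
    by simp
qed

lemma integrable_P_iff:
  fixes f :: "real \<times> real \<Rightarrow> real"
  assumes "1 \<le> j" and f: "f \<in> borel_measurable borel"
  shows "integrable M (\<lambda>x. f (P j x)) \<longleftrightarrow> integrable M (\<lambda>x. f (P 1 x))"
  using integrable_distr_eq[OF P_measurable_M[OF assms(1)] f]
    integrable_distr_eq[OF P_measurable_M[of 1] f] identically_distributed[OF assms(1)] by simp

lemma integral_P_eq:
  fixes f :: "real \<times> real \<Rightarrow> real"
  assumes "1 \<le> j" and f: "f \<in> borel_measurable borel"
  shows "(\<integral>x. f (P j x) \<partial>M) = (\<integral>x. f (P 1 x) \<partial>M)"
  using integral_distr[OF P_measurable_M[OF assms(1)] f]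
    integral_distr[OF P_measurable_M[of 1] f] identically_distributed[OF assms(1)] by simp

lemma integrable_P_1_of_pow32:
  assumes "h \<in> borel_measurable borel" and "integrable M (\<lambda>x. pow32 (h (P 1 x)))"
  shows "integrable M (\<lambda>x. h (P 1 x))"
  by (rule integrable_of_integrable_pow32[OF _ assms(2)]) (use P_measurable_M[of 1] assms(1) in measurable)

definition running :: "nat \<Rightarrow> 'a \<Rightarrow> real" where
  "running n x = of_bool (n < \<tau> x)"

definition stopped_sum :: "(real \<times> real \<Rightarrow> real) \<Rightarrow> nat \<Rightarrow> 'a \<Rightarrow> real" where
  "stopped_sum h n x = psum (\<lambda>j x. h (P j x)) (min (\<tau> x) n) x"

lemma running_nonneg [simp]: "0 \<le> running n x"
  by (simp add: running_def)

lemma running_measurable: "running n \<in> borel_measurable (F n)"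
  using stopping_timeD2[OF stopping, of n] unfolding running_def by measurable

lemma running_measurable_M [measurable]: "running n \<in> borel_measurable M"
  using running_measurable by (rule measurable_from_F)

lemma integrable_running [simp]: "integrable M (running n)"
  by (rule integrable_const_bound[where B=1]) (auto simp: running_def)

lemma integrable_running_mult: "integrable M Y \<Longrightarrow> integrable M (\<lambda>x. running n x * Y x)"
  by (rule Bochner_Integration.integrable_bound[where f=Y]) (auto simp: running_def)

lemma real_min_Suc: "real (min (\<tau> x) (Suc n)) = real (min (\<tau> x) n) + running n x"
  by (simp add: running_def)

lemma integrable_real_min [simp]: "integrable M (\<lambda>x. real (min (\<tau> x) n))"
  by (rule integrable_const_bound[where B="real n"]) auto

lemma integral_real_min_Suc:
  "(\<integral>x. real (min (\<tau> x) (Suc n)) \<partial>M) = (\<integral>x. real (min (\<tau> x) n) \<partial>M) + (\<integral>x. running n x \<partial>M)"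
  unfolding real_min_Suc by simp

lemma integrable_real_tau:
  assumes "integrable M (\<lambda>x. pow32 (real (\<tau> x)))"
  shows "integrable M (\<lambda>x. real (\<tau> x))"
  by (rule integrable_of_integrable_pow32[OF _ assms]) measurable

lemma stopped_sum_0 [simp]: "stopped_sum h 0 x = 0"
  by (simp add: stopped_sum_def psum_def)

lemma stopped_sum_Suc: "stopped_sum h (Suc n) x = stopped_sum h n x + running n x * h (P (Suc n) x)"
proof (cases "n < \<tau> x")
  case True
  then have "min (\<tau> x) (Suc n) = Suc n" "min (\<tau> x) n = n"
    by simp_all
  then show ?thesis
    using True by (simp add: stopped_sum_def running_def psum_def)
next
  case False
  then show ?thesis
    by (simp add: stopped_sum_def running_def min_absorb1)
qed

lemma stopped_sum_eventually_eq:
  "eventually (\<lambda>n. stopped_sum h n x = psum (\<lambda>j x. h (P j x)) (\<tau> x) x) sequentially"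
  by (rule eventually_sequentiallyI[of "\<tau> x"]) (simp add: stopped_sum_def)

lemma stopped_sum_measurable:
  assumes "h \<in> borel_measurable borel"
  shows "stopped_sum h n \<in> borel_measurable (F n)"
proof (induction n)
  case 0
  then show ?case
    by (simp add: stopped_sum_def[abs_def] psum_def)
next
  case (Suc n)
  have "stopped_sum h n \<in> borel_measurable (F (Suc n))" "running n \<in> borel_measurable (F (Suc n))"
    using Suc running_measurable by (auto intro: measurable_F_mono[of n])
  moreover have "(\<lambda>x. h (P (Suc n) x)) \<in> borel_measurable (F (Suc n))"
    using P_measurable[of "Suc n"] assms by measurable
  ultimately show ?case
    unfolding stopped_sum_Suc[abs_def] by measurable
qed

lemma stopped_sum_measurable_M:
  "h \<in> borel_measurable borel \<Longrightarrow> stopped_sum h n \<in> borel_measurable M"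
  using stopped_sum_measurable by (rule measurable_from_F)

(* The next increment is independent of F n, which contains both Y and the event {n < tau}. *)
lemma integral_running_mult_next:
  assumes Y: "Y \<in> borel_measurable (F n)" "integrable M Y"
    and f: "f \<in> borel_measurable borel" "integrable M (\<lambda>x. f (P 1 x))"
  shows "integrable M (\<lambda>x. running n x * Y x * f (P (Suc n) x))"
    and "(\<integral>x. running n x * Y x * f (P (Suc n) x) \<partial>M) = (\<integral>x. running n x * Y x \<partial>M) * (\<integral>x. f (P 1 x) \<partial>M)"
proof -
  have "(\<lambda>x. running n x * Y x) \<in> borel_measurable (F n)"
    using running_measurable Y(1) by measurable
  then have indep: "indep_var borel (\<lambda>x. running n x * Y x) borel (\<lambda>x. f (P (Suc n) x))"
    by (rule indep_var_of_indep_set[OF P_indep_past sets_F_subset space_F _ P_measurable_M f(1)]) simp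
  have "integrable M (\<lambda>x. f (P (Suc n) x))"
    using integrable_P_iff[of "Suc n"] f by simp
  note integrable = integrable_running_mult[OF Y(2)] this
  show "integrable M (\<lambda>x. running n x * Y x * f (P (Suc n) x))"
    using indep_var_integrable[OF indep integrable] .
  show "(\<integral>x. running n x * Y x * f (P (Suc n) x) \<partial>M) = (\<integral>x. running n x * Y x \<partial>M) * (\<integral>x. f (P 1 x) \<partial>M)"
    using indep_var_lebesgue_integral[OF indep integrable] integral_P_eq[of "Suc n"] f(1) by simp
qed

lemma stopped_total_bound:
  fixes \<phi> \<psi> :: "real \<Rightarrow> real"
  assumes \<phi>: "\<And>z. 0 \<le> \<phi> z" "\<And>n. integrable M (\<lambda>x. \<phi> (stopped_sum h n x))"
    and bound: "\<And>n. (\<integral>x. \<phi> (stopped_sum h n x) \<partial>M) \<le> C * (\<integral>x. \<psi> (real (min (\<tau> x) n)) \<partial>M)"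
    and "0 \<le> C" and \<psi>: "\<And>a b. 0 \<le> a \<Longrightarrow> a \<le> b \<Longrightarrow> \<psi> a \<le> \<psi> b"
    and \<psi>_integrable: "integrable M (\<lambda>x. \<psi> (real (\<tau> x)))" "\<And>n. integrable M (\<lambda>x. \<psi> (real (min (\<tau> x) n)))"
  shows "integrable M (\<lambda>x. \<phi> (psum (\<lambda>j x. h (P j x)) (\<tau> x) x))"
    and "(\<integral>x. \<phi> (psum (\<lambda>j x. h (P j x)) (\<tau> x) x) \<partial>M) \<le> C * (\<integral>x. \<psi> (real (\<tau> x)) \<partial>M)"
proof -
  have "(\<integral>x. \<psi> (real (min (\<tau> x) n)) \<partial>M) \<le> (\<integral>x. \<psi> (real (\<tau> x)) \<partial>M)" for n
    using \<psi>_integrable \<psi> by (intro integral_mono) auto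
  then have uniform: "(\<integral>x. \<phi> (stopped_sum h n x) \<partial>M) \<le> C * (\<integral>x. \<psi> (real (\<tau> x)) \<partial>M)" for n
    using bound[of n] mult_left_mono[OF _ \<open>0 \<le> C\<close>] order_trans by blast
  have eventually_eq:
    "eventually (\<lambda>n. \<phi> (stopped_sum h n x) = \<phi> (psum (\<lambda>j x. h (P j x)) (\<tau> x) x)) sequentially" for x
    by (rule eventually_mono[OF stopped_sum_eventually_eq[of h x]]) simp
  note fatou = fatou_eventually_eq[where u="\<lambda>n x. \<phi> (stopped_sum h n x)", OF \<phi>(2) \<phi>(1) eventually_eq uniform]
  show "integrable M (\<lambda>x. \<phi> (psum (\<lambda>j x. h (P j x)) (\<tau> x) x))"
    using fatou(1) .
  show "(\<integral>x. \<phi> (psum (\<lambda>j x. h (P j x)) (\<tau> x) x) \<partial>M) \<le> C * (\<integral>x. \<psi> (real (\<tau> x)) \<partial>M)"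
    using fatou(2) .
qed

subsection \<open>The moment of order 3/2\<close>

lemma integral_pow32_stopped_sum_Suc_le:
  assumes h: "h \<in> borel_measurable borel" and mean: "(\<integral>x. h (P 1 x) \<partial>M) = 0"
    and pow32_int: "integrable M (\<lambda>x. pow32 (h (P 1 x)))"
    and IH: "integrable M (\<lambda>x. pow32 (stopped_sum h n x))"
  shows "integrable M (\<lambda>x. pow32 (stopped_sum h (Suc n) x))"
    and "(\<integral>x. pow32 (stopped_sum h (Suc n) x) \<partial>M)
      \<le> (\<integral>x. pow32 (stopped_sum h n x) \<partial>M) + 2 * (\<integral>x. pow32 (h (P 1 x)) \<partial>M) * (\<integral>x. running n x \<partial>M)"
proof -
  define S X where "S = stopped_sum h n" and "X x = h (P (Suc n) x)" for x
  have S_measurable: "S \<in> borel_measurable (F n)"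
    unfolding S_def using h by (rule stopped_sum_measurable)
  then have sqrt_measurable: "(\<lambda>x. signed_sqrt (S x)) \<in> borel_measurable (F n)"
    by measurable
  have sqrt_integrable: "integrable M (\<lambda>x. signed_sqrt (S x))"
  proof (rule Bochner_Integration.integrable_bound[where f="\<lambda>x. 1 + pow32 (S x)"])
    show "AE x in M. norm (signed_sqrt (S x)) \<le> norm (1 + pow32 (S x))"
      using abs_signed_sqrt_le_one_add_pow32 by (simp add: add_nonneg_nonneg)
  qed (use IH measurable_from_F[OF S_measurable] in \<open>simp_all add: S_def\<close>)
  have "(\<lambda>p. pow32 (h p)) \<in> borel_measurable borel"
    using h by measurable
  note drift = integral_running_mult_next[OF sqrt_measurable sqrt_integrable h
      integrable_P_1_of_pow32[OF h pow32_int], folded X_def]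
    and jump = integral_running_mult_next[of "\<lambda>_. 1" n, OF borel_measurable_const integrable_const
      this pow32_int, folded X_def, unfolded mult_1_right]
  have step: "pow32 (S x + running n x * X x)
      \<le> pow32 (S x) + 3/2 * (running n x * signed_sqrt (S x) * X x) + 2 * (running n x * pow32 (X x))" for x
    using pow32_add_le[of "S x" "X x"] by (cases "n < \<tau> x") (simp_all add: running_def)
  have rhs_integrable: "integrable M (\<lambda>x. pow32 (S x) + 3/2 * (running n x * signed_sqrt (S x) * X x)
      + 2 * (running n x * pow32 (X x)))"
    using IH drift(1) jump(1) unfolding S_def
    by (intro Bochner_Integration.integrable_add integrable_mult_right)
  show next_integrable: "integrable M (\<lambda>x. pow32 (stopped_sum h (Suc n) x))"
    unfolding stopped_sum_Suc S_def[symmetric] X_def[symmetric]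
  proof (rule Bochner_Integration.integrable_bound[OF rhs_integrable])
    show "AE x in M. norm (pow32 (S x + running n x * X x)) \<le> norm (pow32 (S x)
        + 3/2 * (running n x * signed_sqrt (S x) * X x) + 2 * (running n x * pow32 (X x)))"
      using order_trans[OF step abs_ge_self] by (intro AE_I2) simp
  qed (use measurable_from_F[OF S_measurable] P_measurable_M[of "Suc n"] h in \<open>simp add: X_def\<close>)
  have "(\<integral>x. pow32 (stopped_sum h (Suc n) x) \<partial>M)
      \<le> (\<integral>x. pow32 (S x) + 3/2 * (running n x * signed_sqrt (S x) * X x) + 2 * (running n x * pow32 (X x)) \<partial>M)"
    using next_integrable rhs_integrable step
    unfolding stopped_sum_Suc S_def[symmetric] X_def[symmetric] by (rule integral_mono)
  also have "\<dots> = (\<integral>x. pow32 (S x) \<partial>M) + 2 * (\<integral>x. pow32 (h (P 1 x)) \<partial>M) * (\<integral>x. running n x \<partial>M)"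
    using IH drift jump mean unfolding S_def by simp
  finally show "(\<integral>x. pow32 (stopped_sum h (Suc n) x) \<partial>M)
      \<le> (\<integral>x. pow32 (stopped_sum h n x) \<partial>M) + 2 * (\<integral>x. pow32 (h (P 1 x)) \<partial>M) * (\<integral>x. running n x \<partial>M)"
    by (simp add: S_def)
qed

lemma stopped_sum_pow32_bound:
  assumes h: "h \<in> borel_measurable borel" and mean: "(\<integral>x. h (P 1 x) \<partial>M) = 0"
    and pow32_int: "integrable M (\<lambda>x. pow32 (h (P 1 x)))"
  shows "integrable M (\<lambda>x. pow32 (stopped_sum h n x)) \<and>
    (\<integral>x. pow32 (stopped_sum h n x) \<partial>M) \<le> 2 * (\<integral>x. pow32 (h (P 1 x)) \<partial>M) * (\<integral>x. real (min (\<tau> x) n) \<partial>M)"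
proof (induction n)
  case (Suc n)
  then show ?case
    using integral_pow32_stopped_sum_Suc_le[OF h mean pow32_int, of n]
    by (simp add: integral_real_min_Suc algebra_simps)
qed simp

lemma stopped_sum_pow32_le_tau:
  assumes h: "h \<in> borel_measurable borel" and mean: "(\<integral>x. h (P 1 x) \<partial>M) = 0"
    and pow32_int: "integrable M (\<lambda>x. pow32 (h (P 1 x)))" and tau_int: "integrable M (\<lambda>x. real (\<tau> x))"
  shows "(\<integral>x. pow32 (stopped_sum h n x) \<partial>M) \<le> 2 * (\<integral>x. pow32 (h (P 1 x)) \<partial>M) * (\<integral>x. real (\<tau> x) \<partial>M)"
proof -
  have "(\<integral>x. real (min (\<tau> x) n) \<partial>M) \<le> (\<integral>x. real (\<tau> x) \<partial>M)"
    using tau_int by (intro integral_mono) auto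
  then have "2 * (\<integral>x. pow32 (h (P 1 x)) \<partial>M) * (\<integral>x. real (min (\<tau> x) n) \<partial>M)
      \<le> 2 * (\<integral>x. pow32 (h (P 1 x)) \<partial>M) * (\<integral>x. real (\<tau> x) \<partial>M)"
    by (intro mult_left_mono) simp_all
  then show ?thesis
    using stopped_sum_pow32_bound[OF h mean pow32_int, of n] by linarith
qed

lemma stopped_total_pow32_bound:
  assumes h: "h \<in> borel_measurable borel" and mean: "(\<integral>x. h (P 1 x) \<partial>M) = 0"
    and pow32_int: "integrable M (\<lambda>x. pow32 (h (P 1 x)))" and tau_int: "integrable M (\<lambda>x. real (\<tau> x))"
  shows "integrable M (\<lambda>x. pow32 (psum (\<lambda>j x. h (P j x)) (\<tau> x) x))"
    and "(\<integral>x. pow32 (psum (\<lambda>j x. h (P j x)) (\<tau> x) x) \<partial>M)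
      \<le> 2 * (\<integral>x. pow32 (h (P 1 x)) \<partial>M) * (\<integral>x. real (\<tau> x) \<partial>M)"
proof -
  note bound = stopped_sum_pow32_bound[OF h mean pow32_int]
  have "0 \<le> 2 * (\<integral>x. pow32 (h (P 1 x)) \<partial>M)"
    by simp
  note total = stopped_total_bound[where \<psi>="\<lambda>t. t", OF pow32_nonneg conjunct1[OF bound]
      conjunct2[OF bound] this _ tau_int integrable_real_min]
  show "integrable M (\<lambda>x. pow32 (psum (\<lambda>j x. h (P j x)) (\<tau> x) x))"
    using total(1) by simp
  show "(\<integral>x. pow32 (psum (\<lambda>j x. h (P j x)) (\<tau> x) x) \<partial>M)
      \<le> 2 * (\<integral>x. pow32 (h (P 1 x)) \<partial>M) * (\<integral>x. real (\<tau> x) \<partial>M)"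
    using total(2) by simp
qed

subsection \<open>The moment of order 3\<close>

lemma integrable_stopped_sum_cube:
  assumes h: "h \<in> borel_measurable borel" and cube_int: "integrable M (\<lambda>x. \<bar>h (P 1 x)\<bar> ^ 3)"
  shows "integrable M (\<lambda>x. \<bar>stopped_sum h n x\<bar> ^ 3)"
proof (induction n)
  case (Suc n)
  have "(\<lambda>p. \<bar>h p\<bar> ^ 3) \<in> borel_measurable borel"
    using h by measurable
  then have "integrable M (\<lambda>x. \<bar>h (P (Suc n) x)\<bar> ^ 3)"
    using integrable_P_iff[of "Suc n" "\<lambda>p. \<bar>h p\<bar> ^ 3"] cube_int by simp
  then have bound_integrable:
    "integrable M (\<lambda>x. 4 * (\<bar>stopped_sum h n x\<bar> ^ 3 + running n x * \<bar>h (P (Suc n) x)\<bar> ^ 3))"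
    using Suc integrable_running_mult by simp
  show ?case
  proof (rule Bochner_Integration.integrable_bound[OF bound_integrable])
    have "\<bar>stopped_sum h (Suc n) x\<bar> ^ 3
        \<le> 4 * (\<bar>stopped_sum h n x\<bar> ^ 3 + running n x * \<bar>h (P (Suc n) x)\<bar> ^ 3)" for x
      using abs_add_cube_le_4[of "stopped_sum h n x" "running n x * h (P (Suc n) x)"]
      by (cases "n < \<tau> x") (simp_all add: stopped_sum_Suc running_def)
    then show "AE x in M. norm (\<bar>stopped_sum h (Suc n) x\<bar> ^ 3)
        \<le> norm (4 * (\<bar>stopped_sum h n x\<bar> ^ 3 + running n x * \<bar>h (P (Suc n) x)\<bar> ^ 3))"
      by (intro AE_I2) (simp add: order_trans[OF _ abs_ge_self])
  qed (use stopped_sum_measurable_M[OF h] in measurable)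
qed simp

(* E |S_n|^3 grows by about 3 v E |S_n| per step, v being the second moment of an increment; the
   correction term absorbs this growth by abs_le_sqrt_increment. *)

definition cube_potential :: "real \<Rightarrow> (real \<times> real \<Rightarrow> real) \<Rightarrow> nat \<Rightarrow> 'a \<Rightarrow> real" where
  "cube_potential v h n x =
    \<bar>stopped_sum h n x\<bar> ^ 3 - 3 * v * sqrt (min (\<tau> x) n) * (stopped_sum h n x)\<^sup>2"

definition cube_increment :: "real \<Rightarrow> (real \<times> real \<Rightarrow> real) \<Rightarrow> nat \<Rightarrow> 'a \<Rightarrow> real" where
  "cube_increment v h n x =
    running n x * (3 * stopped_sum h n x * \<bar>stopped_sum h n x\<bar> - 6 * v * sqrt (Suc n) * stopped_sum h n x)
      * h (P (Suc n) x)
    + 3 * (running n x * \<bar>stopped_sum h n x\<bar> * (h (P (Suc n) x))\<^sup>2)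
    - 3 * v * sqrt (Suc n) * (running n x * (h (P (Suc n) x))\<^sup>2)
    + 3 * (running n x * \<bar>h (P (Suc n) x)\<bar> ^ 3)
    - 3 * v * (sqrt (Suc n) - sqrt n) * (running n x * (stopped_sum h n x)\<^sup>2)"

lemma cube_potential_Suc_le: "cube_potential v h (Suc n) x \<le> cube_potential v h n x + cube_increment v h n x"
proof (cases "n < \<tau> x")
  case True
  define s X r where "s = stopped_sum h n x" and "X = h (P (Suc n) x)" and "r = sqrt (Suc n)"
  have "sqrt (min (\<tau> x) (Suc n)) = r" "sqrt (min (\<tau> x) n) = sqrt n" "running n x = 1"
    using True by (simp_all add: running_def r_def)
  then show ?thesis
    using abs_add_cube_le[of s X]
    unfolding cube_potential_def cube_increment_def stopped_sum_Suc
      s_def[symmetric] X_def[symmetric] r_def[symmetric]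
    by (simp add: algebra_simps power2_eq_square)
next
  case False
  then show ?thesis
    by (simp add: cube_potential_def cube_increment_def stopped_sum_Suc running_def min_absorb1)
qed

lemma integral_running_abs_le:
  fixes s :: "'a \<Rightarrow> real"
  assumes "s \<in> borel_measurable M" and "integrable M (\<lambda>x. \<bar>s x\<bar> ^ 3)"
  shows "(\<integral>x. running n x * \<bar>s x\<bar> \<partial>M)
    \<le> (sqrt (Suc n) - sqrt n) * (\<integral>x. running n x * (s x)\<^sup>2 \<partial>M) + 2 * sqrt (Suc n) * (\<integral>x. running n x \<partial>M)"
proof -
  note s = integrable_lower_powers_of_cube[OF assms]
  have "(\<integral>x. running n x * \<bar>s x\<bar> \<partial>M)
      \<le> (\<integral>x. (sqrt (Suc n) - sqrt n) * (running n x * (s x)\<^sup>2) + 2 * sqrt (Suc n) * running n x \<partial>M)"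
  proof (rule integral_mono)
    show "running n x * \<bar>s x\<bar>
        \<le> (sqrt (Suc n) - sqrt n) * (running n x * (s x)\<^sup>2) + 2 * sqrt (Suc n) * running n x" for x
      using mult_left_mono[OF abs_le_sqrt_increment[of "s x" n] running_nonneg[of n x]]
      by (simp add: algebra_simps)
  qed (use s integrable_running_mult in simp_all)
  also have "\<dots> = (sqrt (Suc n) - sqrt n) * (\<integral>x. running n x * (s x)\<^sup>2 \<partial>M)
      + 2 * sqrt (Suc n) * (\<integral>x. running n x \<partial>M)"
    using s integrable_running_mult by simp
  finally show ?thesis .
qed

lemma integrable_sqrt_min_mult_sq:
  assumes h: "h \<in> borel_measurable borel" and cube_int: "integrable M (\<lambda>x. \<bar>h (P 1 x)\<bar> ^ 3)"
  shows "integrable M (\<lambda>x. sqrt (min (\<tau> x) n) * (stopped_sum h n x)\<^sup>2)"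
proof (rule Bochner_Integration.integrable_bound)
  note S = stopped_sum_measurable_M[OF h, of n] integrable_stopped_sum_cube[OF h cube_int, of n]
  show "integrable M (\<lambda>x. sqrt n * (stopped_sum h n x)\<^sup>2)"
    using integrable_lower_powers_of_cube(2)[OF S] by simp
  show "AE x in M. norm (sqrt (min (\<tau> x) n) * (stopped_sum h n x)\<^sup>2) \<le> norm (sqrt n * (stopped_sum h n x)\<^sup>2)"
    by (intro AE_I2) (simp add: mult_right_mono)
  show "(\<lambda>x. sqrt (min (\<tau> x) n) * (stopped_sum h n x)\<^sup>2) \<in> borel_measurable M"
    using S by measurable
qed

lemma integrable_cube_potential:
  assumes h: "h \<in> borel_measurable borel" and cube_int: "integrable M (\<lambda>x. \<bar>h (P 1 x)\<bar> ^ 3)"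
  shows "integrable M (cube_potential v h n)"
  using integrable_sqrt_min_mult_sq[OF assms, of n] integrable_stopped_sum_cube[OF assms, of n]
  unfolding cube_potential_def[abs_def] by (simp add: mult.assoc)

lemma integral_cube_increment:
  assumes h: "h \<in> borel_measurable borel" and mean: "(\<integral>x. h (P 1 x) \<partial>M) = 0"
    and cube_int: "integrable M (\<lambda>x. \<bar>h (P 1 x)\<bar> ^ 3)"
  defines "v \<equiv> \<integral>x. (h (P 1 x))\<^sup>2 \<partial>M" and "c \<equiv> \<integral>x. \<bar>h (P 1 x)\<bar> ^ 3 \<partial>M"
  shows "integrable M (cube_increment v h n)"
    and "(\<integral>x. cube_increment v h n x \<partial>M) = 3 * v * (\<integral>x. running n x * \<bar>stopped_sum h n x\<bar> \<partial>M)
      - 3 * v * (sqrt (Suc n) - sqrt n) * (\<integral>x. running n x * (stopped_sum h n x)\<^sup>2 \<partial>M)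
      + (3 * c - 3 * v\<^sup>2 * sqrt (Suc n)) * (\<integral>x. running n x \<partial>M)"
proof -
  define s where "s = stopped_sum h n"
  have s_measurable: "s \<in> borel_measurable (F n)"
    unfolding s_def using h by (rule stopped_sum_measurable)
  note s_powers = integrable_lower_powers_of_cube[OF measurable_from_F[OF s_measurable]
      integrable_stopped_sum_cube[OF h cube_int, of n, folded s_def]]
  have "(\<lambda>x. h (P 1 x)) \<in> borel_measurable M"
    using P_measurable_M[of 1] h by measurable
  note h_powers = integrable_lower_powers_of_cube[OF this cube_int]
  have measurable: "(\<lambda>x. 3 * s x * \<bar>s x\<bar> - 6 * v * sqrt (Suc n) * s x) \<in> borel_measurable (F n)"
    "(\<lambda>x. \<bar>s x\<bar>) \<in> borel_measurable (F n)" "(\<lambda>p. (h p)\<^sup>2) \<in> borel_measurable borel"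
    "(\<lambda>p. \<bar>h p\<bar> ^ 3) \<in> borel_measurable borel"
    using s_measurable h by measurable
  have "integrable M (\<lambda>x. 3 * s x * \<bar>s x\<bar> - 6 * v * sqrt (Suc n) * s x)" "integrable M (\<lambda>x. \<bar>s x\<bar>)"
    using s_powers by (simp_all add: mult.assoc)
  note drift = integral_running_mult_next[OF measurable(1) this(1) h h_powers(1)]
    and quadratic = integral_running_mult_next[OF measurable(2) this(2) measurable(3) h_powers(2)]
    and variance = integral_running_mult_next[of "\<lambda>_. 1" n, OF borel_measurable_const integrable_const
      measurable(3) h_powers(2), unfolded mult_1_right]
    and cubic = integral_running_mult_next[of "\<lambda>_. 1" n, OF borel_measurable_const integrable_const
      measurable(4) cube_int, unfolded mult_1_right]
  note integrable = drift(1) quadratic(1) variance(1) cubic(1) integrable_running_mult[OF s_powers(2)]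
  show "integrable M (cube_increment v h n)"
    using integrable unfolding cube_increment_def[abs_def] s_def
    by (intro Bochner_Integration.integrable_add Bochner_Integration.integrable_diff integrable_mult_right)
  have "(\<integral>x. cube_increment v h n x \<partial>M)
      = (\<integral>x. running n x * (3 * s x * \<bar>s x\<bar> - 6 * v * sqrt (Suc n) * s x) * h (P (Suc n) x) \<partial>M)
      + 3 * (\<integral>x. running n x * \<bar>s x\<bar> * (h (P (Suc n) x))\<^sup>2 \<partial>M)
      - 3 * v * sqrt (Suc n) * (\<integral>x. running n x * (h (P (Suc n) x))\<^sup>2 \<partial>M)
      + 3 * (\<integral>x. running n x * \<bar>h (P (Suc n) x)\<bar> ^ 3 \<partial>M)
      - 3 * v * (sqrt (Suc n) - sqrt n) * (\<integral>x. running n x * (s x)\<^sup>2 \<partial>M)"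
    using integrable unfolding cube_increment_def s_def
    by (simp only: Bochner_Integration.integral_add Bochner_Integration.integral_diff integral_mult_right_zero
        Bochner_Integration.integrable_add Bochner_Integration.integrable_diff integrable_mult_right)
  also have "\<dots> = 3 * v * (\<integral>x. running n x * \<bar>s x\<bar> \<partial>M)
      - 3 * v * (sqrt (Suc n) - sqrt n) * (\<integral>x. running n x * (s x)\<^sup>2 \<partial>M)
      + (3 * c - 3 * v\<^sup>2 * sqrt (Suc n)) * (\<integral>x. running n x \<partial>M)"
    unfolding drift(2) quadratic(2) variance(2) cubic(2) mean
    by (simp add: v_def c_def algebra_simps power2_eq_square)
  finally show "(\<integral>x. cube_increment v h n x \<partial>M) = 3 * v * (\<integral>x. running n x * \<bar>stopped_sum h n x\<bar> \<partial>M)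
      - 3 * v * (sqrt (Suc n) - sqrt n) * (\<integral>x. running n x * (stopped_sum h n x)\<^sup>2 \<partial>M)
      + (3 * c - 3 * v\<^sup>2 * sqrt (Suc n)) * (\<integral>x. running n x \<partial>M)"
    by (simp add: s_def)
qed

lemma integral_cube_potential_Suc_le:
  assumes h: "h \<in> borel_measurable borel" and mean: "(\<integral>x. h (P 1 x) \<partial>M) = 0"
    and cube_int: "integrable M (\<lambda>x. \<bar>h (P 1 x)\<bar> ^ 3)"
  defines "v \<equiv> \<integral>x. (h (P 1 x))\<^sup>2 \<partial>M" and "c \<equiv> \<integral>x. \<bar>h (P 1 x)\<bar> ^ 3 \<partial>M"
  shows "(\<integral>x. cube_potential v h (Suc n) x \<partial>M)
    \<le> (\<integral>x. cube_potential v h n x \<partial>M) + (6 * v + 3 * c) * sqrt (Suc n) * (\<integral>x. running n x \<partial>M)"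
proof -
  define r R where "r = sqrt (Suc n)" and "R = (\<integral>x. running n x \<partial>M)"
  note increment = integral_cube_increment[OF h mean cube_int, of n, folded v_def c_def]
  have "(\<integral>x. cube_potential v h (Suc n) x \<partial>M) \<le> (\<integral>x. cube_potential v h n x + cube_increment v h n x \<partial>M)"
    using integrable_cube_potential[OF h cube_int] increment(1) cube_potential_Suc_le
    by (intro integral_mono) auto
  also have "\<dots> = (\<integral>x. cube_potential v h n x \<partial>M) + 3 * v * (\<integral>x. running n x * \<bar>stopped_sum h n x\<bar> \<partial>M)
      - 3 * v * (r - sqrt n) * (\<integral>x. running n x * (stopped_sum h n x)\<^sup>2 \<partial>M) + (3 * c - 3 * v\<^sup>2 * r) * R"
    using integrable_cube_potential[OF h cube_int] increment by (simp add: r_def R_def)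
  also have "\<dots> \<le> (\<integral>x. cube_potential v h n x \<partial>M) + (6 * v + 3 * c) * r * R"
  proof -
    have nonneg: "0 \<le> v" "0 \<le> c" "1 \<le> r" "0 \<le> R"
      by (simp_all add: v_def c_def r_def R_def)
    have "3 * v * (\<integral>x. running n x * \<bar>stopped_sum h n x\<bar> \<partial>M)
        \<le> 3 * v * ((r - sqrt n) * (\<integral>x. running n x * (stopped_sum h n x)\<^sup>2 \<partial>M) + 2 * r * R)"
      using integral_running_abs_le[OF stopped_sum_measurable_M[OF h]
          integrable_stopped_sum_cube[OF h cube_int]] nonneg(1)
      unfolding r_def R_def by (intro mult_left_mono) auto
    moreover have "c * R * 1 \<le> c * R * r"
      using nonneg by (intro mult_left_mono) auto
    moreover have "0 \<le> v\<^sup>2 * r * R"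
      using nonneg by simp
    ultimately show ?thesis
      by (simp add: algebra_simps)
  qed
  finally show ?thesis
    by (simp add: r_def R_def)
qed

lemma integrable_pow32_min [simp]: "integrable M (\<lambda>x. pow32 (real (min (\<tau> x) n)))"
  by (rule integrable_const_bound[where B="pow32 (real n)"]) (auto simp: pow32_def power_mono)

lemma integral_pow32_min_Suc_ge:
  "(\<integral>x. pow32 (real (min (\<tau> x) n)) \<partial>M) + sqrt (Suc n) * (\<integral>x. running n x \<partial>M)
    \<le> (\<integral>x. pow32 (real (min (\<tau> x) (Suc n))) \<partial>M)"
proof -
  have "pow32 (real (min (\<tau> x) n)) + sqrt (Suc n) * running n x \<le> pow32 (real (min (\<tau> x) (Suc n)))" for x
  proof (cases "n < \<tau> x")
    case True
    have "real n * sqrt n \<le> real n * sqrt (Suc n)"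
      by (intro mult_left_mono) auto
    then show ?thesis
      using True by (simp add: pow32_eq_abs_mult_sqrt running_def min_absorb2 algebra_simps)
  qed (simp add: running_def min_absorb1)
  then have "(\<integral>x. pow32 (real (min (\<tau> x) n)) + sqrt (Suc n) * running n x \<partial>M)
      \<le> (\<integral>x. pow32 (real (min (\<tau> x) (Suc n))) \<partial>M)"
    by (intro integral_mono) auto
  then show ?thesis
    by simp
qed

lemma integral_cube_potential_le:
  assumes h: "h \<in> borel_measurable borel" and mean: "(\<integral>x. h (P 1 x) \<partial>M) = 0"
    and cube_int: "integrable M (\<lambda>x. \<bar>h (P 1 x)\<bar> ^ 3)"
  defines "v \<equiv> \<integral>x. (h (P 1 x))\<^sup>2 \<partial>M" and "c \<equiv> \<integral>x. \<bar>h (P 1 x)\<bar> ^ 3 \<partial>M"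
  shows "(\<integral>x. cube_potential v h n x \<partial>M) \<le> (6 * v + 3 * c) * (\<integral>x. pow32 (real (min (\<tau> x) n)) \<partial>M)"
proof (induction n)
  case 0
  then show ?case
    by (simp add: cube_potential_def)
next
  case (Suc n)
  have "0 \<le> 6 * v + 3 * c"
    by (simp add: v_def c_def)
  then have "(6 * v + 3 * c) * ((\<integral>x. pow32 (real (min (\<tau> x) n)) \<partial>M) + sqrt (Suc n) * (\<integral>x. running n x \<partial>M))
      \<le> (6 * v + 3 * c) * (\<integral>x. pow32 (real (min (\<tau> x) (Suc n))) \<partial>M)"
    by (intro mult_left_mono integral_pow32_min_Suc_ge)
  then show ?case
    using Suc integral_cube_potential_Suc_le[OF h mean cube_int, of n] unfolding v_def c_def
    by (simp add: algebra_simps)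
qed

lemma stopped_sum_cube_bound:
  assumes h: "h \<in> borel_measurable borel" and mean: "(\<integral>x. h (P 1 x) \<partial>M) = 0"
    and cube_int: "integrable M (\<lambda>x. \<bar>h (P 1 x)\<bar> ^ 3)"
  defines "v \<equiv> \<integral>x. (h (P 1 x))\<^sup>2 \<partial>M" and "c \<equiv> \<integral>x. \<bar>h (P 1 x)\<bar> ^ 3 \<partial>M"
  shows "(\<integral>x. \<bar>stopped_sum h n x\<bar> ^ 3 \<partial>M)
    \<le> 2 * (6 * v + 3 * c + 3 * v * (6 * v + 1)\<^sup>2) * (\<integral>x. pow32 (real (min (\<tau> x) n)) \<partial>M)"
proof -
  define g W E where "g = (\<integral>x. \<bar>stopped_sum h n x\<bar> ^ 3 \<partial>M)"
    and "W = (\<integral>x. sqrt (min (\<tau> x) n) * (stopped_sum h n x)\<^sup>2 \<partial>M)"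
    and "E = (\<integral>x. pow32 (real (min (\<tau> x) n)) \<partial>M)"
  define d where "d = 1 / (6 * v + 1)"
  have v: "0 \<le> v"
    by (simp add: v_def)
  then have d: "0 < d" "3 * v * d \<le> 1/2" "1 / d\<^sup>2 = (6 * v + 1)\<^sup>2"
    by (simp_all add: d_def field_simps)
  note integrable = integrable_stopped_sum_cube[OF h cube_int, of n]
    integrable_sqrt_min_mult_sq[OF h cube_int, of n]
  have "g - 3 * v * W \<le> (6 * v + 3 * c) * E"
    using integral_cube_potential_le[OF h mean cube_int, of n] integrable
    unfolding g_def W_def E_def v_def c_def cube_potential_def by (simp add: mult.assoc)
  moreover have "W \<le> d * g + E / d\<^sup>2"
  proof -
    have "W \<le> (\<integral>x. d * \<bar>stopped_sum h n x\<bar> ^ 3 + pow32 (real (min (\<tau> x) n)) / d\<^sup>2 \<partial>M)"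
      unfolding W_def using integrable
    proof (intro integral_mono)
      show "sqrt (min (\<tau> x) n) * (stopped_sum h n x)\<^sup>2
          \<le> d * \<bar>stopped_sum h n x\<bar> ^ 3 + pow32 (real (min (\<tau> x) n)) / d\<^sup>2" for x
        using abs_mult_le_young[OF d(1), of "(stopped_sum h n x)\<^sup>2" "sqrt (min (\<tau> x) n)"]
        by (simp add: pow32_def mult.commute)
    qed simp_all
    then show ?thesis
      using integrable unfolding g_def E_def by simp
  qed
  moreover have "0 \<le> g" "0 \<le> E"
    by (simp_all add: g_def E_def)
  ultimately have g_le: "g \<le> (6 * v + 3 * c) * E + 3 * v * (6 * v + 1)\<^sup>2 * E + (3 * v * d) * g"
    using v mult_left_mono[OF \<open>W \<le> d * g + E / d\<^sup>2\<close>, of "3 * v"] d(3)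
    by (simp add: algebra_simps divide_inverse power_one_over[symmetric])
  have half: "(3 * v * d) * g \<le> 1/2 * g"
    using d(2) \<open>0 \<le> g\<close> by (rule mult_right_mono)
  have absorb: "g \<le> 2 * a" if "g \<le> a + t" "t \<le> 1/2 * g" for a t
    using that by linarith
  have "g \<le> 2 * ((6 * v + 3 * c) * E + 3 * v * (6 * v + 1)\<^sup>2 * E)"
    by (rule absorb[OF g_le half])
  then show ?thesis
    unfolding g_def[symmetric] E_def[symmetric] by (simp add: algebra_simps)
qed

lemma stopped_total_cube_bound:
  assumes h: "h \<in> borel_measurable borel" and mean: "(\<integral>x. h (P 1 x) \<partial>M) = 0"
    and cube_int: "integrable M (\<lambda>x. \<bar>h (P 1 x)\<bar> ^ 3)" and tau_int: "integrable M (\<lambda>x. pow32 (real (\<tau> x)))"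
  defines "v \<equiv> \<integral>x. (h (P 1 x))\<^sup>2 \<partial>M" and "c \<equiv> \<integral>x. \<bar>h (P 1 x)\<bar> ^ 3 \<partial>M"
  shows "integrable M (\<lambda>x. \<bar>psum (\<lambda>j x. h (P j x)) (\<tau> x) x\<bar> ^ 3)"
    and "(\<integral>x. \<bar>psum (\<lambda>j x. h (P j x)) (\<tau> x) x\<bar> ^ 3 \<partial>M)
      \<le> 2 * (6 * v + 3 * c + 3 * v * (6 * v + 1)\<^sup>2) * (\<integral>x. pow32 (real (\<tau> x)) \<partial>M)"
proof -
  have "0 \<le> 2 * (6 * v + 3 * c + 3 * v * (6 * v + 1)\<^sup>2)"
    by (simp add: v_def c_def)
  note total = stopped_total_bound[where \<psi>=pow32, OF _ integrable_stopped_sum_cube[OF h cube_int]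
      stopped_sum_cube_bound[OF h mean cube_int, folded v_def c_def] this pow32_mono tau_int
      integrable_pow32_min]
  show "integrable M (\<lambda>x. \<bar>psum (\<lambda>j x. h (P j x)) (\<tau> x) x\<bar> ^ 3)"
    using total(1) by simp
  show "(\<integral>x. \<bar>psum (\<lambda>j x. h (P j x)) (\<tau> x) x\<bar> ^ 3 \<partial>M)
      \<le> 2 * (6 * v + 3 * c + 3 * v * (6 * v + 1)\<^sup>2) * (\<integral>x. pow32 (real (\<tau> x)) \<partial>M)"
    using total(2) by simp
qed

section \<open>Wald's identity for products\<close>

lemma integral_stopped_sum_mult:
  assumes h: "h1 \<in> borel_measurable borel" "h2 \<in> borel_measurable borel"
    and mean: "(\<integral>x. h1 (P 1 x) \<partial>M) = 0" "(\<integral>x. h2 (P 1 x) \<partial>M) = 0"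
    and moments: "integrable M (\<lambda>x. pow32 (h1 (P 1 x)))" "integrable M (\<lambda>x. \<bar>h2 (P 1 x)\<bar> ^ 3)"
  shows "(\<integral>x. stopped_sum h1 n x * stopped_sum h2 n x \<partial>M)
    = (\<integral>x. real (min (\<tau> x) n) \<partial>M) * (\<integral>x. h1 (P 1 x) * h2 (P 1 x) \<partial>M)"
proof (induction n)
  case (Suc n)
  define S1 S2 where "S1 = stopped_sum h1 n" and "S2 = stopped_sum h2 n"
  have S_measurable: "S1 \<in> borel_measurable (F n)" "S2 \<in> borel_measurable (F n)"
    using stopped_sum_measurable h by (simp_all add: S1_def S2_def)
  have S1_pow32: "integrable M (\<lambda>x. pow32 (S1 x))"
    using stopped_sum_pow32_bound[OF h(1) mean(1) moments(1)] by (simp add: S1_def)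
  have S2_cube: "integrable M (\<lambda>x. \<bar>S2 x\<bar> ^ 3)"
    using integrable_stopped_sum_cube[OF h(2) moments(2)] by (simp add: S2_def)
  have P1_measurable: "(\<lambda>x. h1 (P 1 x)) \<in> borel_measurable M" "(\<lambda>x. h2 (P 1 x)) \<in> borel_measurable M"
    using P_measurable_M[of 1] h by measurable
  have "integrable M S1"
    using measurable_from_F[OF S_measurable(1)] S1_pow32 by (rule integrable_of_integrable_pow32)
  note cross1 = integral_running_mult_next[OF S_measurable(1) this h(2)
      integrable_lower_powers_of_cube(1)[OF P1_measurable(2) moments(2)]]
  note cross2 = integral_running_mult_next[OF S_measurable(2)
      integrable_lower_powers_of_cube(1)[OF measurable_from_F[OF S_measurable(2)] S2_cube] h(1)
      integrable_P_1_of_pow32[OF h(1) moments(1)]]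
  have "(\<lambda>p. h1 p * h2 p) \<in> borel_measurable borel"
    using h by measurable
  note diagonal = integral_running_mult_next[of "\<lambda>_. 1" n, OF borel_measurable_const integrable_const this
      integrable_mult_of_pow32_cube[OF P1_measurable moments], unfolded mult_1_right]
  have product: "integrable M (\<lambda>x. S1 x * S2 x)"
    using measurable_from_F[OF S_measurable(1)] measurable_from_F[OF S_measurable(2)] S1_pow32 S2_cube
    by (rule integrable_mult_of_pow32_cube)
  have "stopped_sum h1 (Suc n) x * stopped_sum h2 (Suc n) x
      = S1 x * S2 x + running n x * S1 x * h2 (P (Suc n) x) + running n x * S2 x * h1 (P (Suc n) x)
        + running n x * (h1 (P (Suc n) x) * h2 (P (Suc n) x))" for x
    by (cases "n < \<tau> x") (simp_all add: S1_def S2_def stopped_sum_Suc running_def algebra_simps)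
  then have "(\<integral>x. stopped_sum h1 (Suc n) x * stopped_sum h2 (Suc n) x \<partial>M)
      = (\<integral>x. S1 x * S2 x \<partial>M) + (\<integral>x. running n x \<partial>M) * (\<integral>x. h1 (P 1 x) * h2 (P 1 x) \<partial>M)"
    using product cross1 cross2 diagonal mean by simp
  then show ?case
    using Suc by (simp add: S1_def S2_def integral_real_min_Suc algebra_simps)
qed simp

(* The walk restarted at time n and stopped at tau - n; by psum_split_at its total is the tail
   of the stopped sum. *)

lemma iid_adapted_walk_shift: "iid_adapted_walk M (\<lambda>j. F (n + j)) (\<lambda>j. P (n + j)) (\<lambda>x. \<tau> x - n)"
proof unfold_locales
  show "space (F (n + j)) = space M" for j
    by (rule space_F)
  show "sets (F (n + i)) \<subseteq> sets (F (n + j))" if "i \<le> j" for i j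
    using that by (intro sets_F_mono) simp
  show "sets (F (n + j)) \<subseteq> sets M" for j
    by (rule sets_F_subset)
  show "distr M borel (P (n + i)) = distr M borel (P (n + 1))" if "1 \<le> i" for i
    using identically_distributed[of "n + i"] identically_distributed[of "n + 1"] that by simp
  show "indep_adapted M (\<lambda>j. F (n + j)) (\<lambda>j. P (n + j))"
    unfolding indep_adapted_def
  proof (intro allI impI conjI)
    fix j :: nat
    assume j: "1 \<le> j"
    then show "P (n + j) \<in> borel_measurable (F (n + j))"
      by (intro P_measurable) simp
    have "n + j - 1 = n + (j - 1)"
      using j by simp
    then show "indep_set (sets (F (n + (j - 1)))) {P (n + j) -` A \<inter> space M |A. A \<in> sets borel}"
      using adapted[unfolded indep_adapted_def, rule_format, of "n + j"] j by simp
  qed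
  show "stopping_time (\<lambda>j. F (n + j)) (\<lambda>x. \<tau> x - n)"
  proof (rule stopping_timeI)
    fix k
    have "(\<lambda>x. \<tau> x - n \<le> k) = (\<lambda>x. \<tau> x \<le> n + k)"
      by auto
    then show "Measurable.pred (F (n + k)) (\<lambda>x. \<tau> x - n \<le> k)"
      using stopping_timeD[OF stopping] by simp
  qed
qed

lemma tail_pow32_tendsto_zero:
  assumes h: "h \<in> borel_measurable borel" and mean: "(\<integral>x. h (P 1 x) \<partial>M) = 0"
    and pow32_int: "integrable M (\<lambda>x. pow32 (h (P 1 x)))" and tau_int: "integrable M (\<lambda>x. real (\<tau> x))"
  shows "integrable M (\<lambda>x. pow32 (psum (\<lambda>j x. h (P (n + j) x)) (\<tau> x - n) x))"
    and "(\<lambda>n. \<integral>x. pow32 (psum (\<lambda>j x. h (P (n + j) x)) (\<tau> x - n) x) \<partial>M) \<longlonglongrightarrow> 0"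
proof -
  have pow32_h: "(\<lambda>p. pow32 (h p)) \<in> borel_measurable borel"
    using h by measurable
  have shifted_moments: "(\<integral>x. h (P (n + 1) x) \<partial>M) = 0" "integrable M (\<lambda>x. pow32 (h (P (n + 1) x)))"
    "(\<integral>x. pow32 (h (P (n + 1) x)) \<partial>M) = (\<integral>x. pow32 (h (P 1 x)) \<partial>M)" for n
    using integral_P_eq[of "n + 1" h] integral_P_eq[of "n + 1" "\<lambda>p. pow32 (h p)"]
      integrable_P_iff[of "n + 1" "\<lambda>p. pow32 (h p)"] h pow32_h mean pow32_int by simp_all
  have tail_int: "integrable M (\<lambda>x. real (\<tau> x - n))" for n
    using tau_int by (rule Bochner_Integration.integrable_bound) auto
  have bound: "integrable M (\<lambda>x. pow32 (psum (\<lambda>j x. h (P (n + j) x)) (\<tau> x - n) x))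
    \<and> (\<integral>x. pow32 (psum (\<lambda>j x. h (P (n + j) x)) (\<tau> x - n) x) \<partial>M)
      \<le> 2 * (\<integral>x. pow32 (h (P 1 x)) \<partial>M) * (\<integral>x. real (\<tau> x - n) \<partial>M)" for n
  proof -
    interpret shifted: iid_adapted_walk M "\<lambda>j. F (n + j)" "\<lambda>j. P (n + j)" "\<lambda>x. \<tau> x - n"
      by (rule iid_adapted_walk_shift)
    show ?thesis
      using shifted.stopped_total_pow32_bound[OF h shifted_moments(1,2) tail_int] shifted_moments(3)[of n]
      by simp
  qed
  then show "integrable M (\<lambda>x. pow32 (psum (\<lambda>j x. h (P (n + j) x)) (\<tau> x - n) x))"
    by blast
  have "(\<lambda>n. \<integral>x. real (\<tau> x - n) \<partial>M) \<longlonglongrightarrow> 0"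
    using tau_int by (intro tendsto_integral_tail_zero[where f=real]) (simp_all add: mono_def)
  then have limit: "(\<lambda>n. 2 * (\<integral>x. pow32 (h (P 1 x)) \<partial>M) * (\<integral>x. real (\<tau> x - n) \<partial>M)) \<longlonglongrightarrow> 0"
    using tendsto_mult_left[of _ 0 sequentially "2 * (\<integral>x. pow32 (h (P 1 x)) \<partial>M)"] by simp
  have nonneg: "0 \<le> (\<integral>x. pow32 (psum (\<lambda>j x. h (P (n + j) x)) (\<tau> x - n) x) \<partial>M)" for n
    by (simp add: integral_nonneg_AE)
  show "(\<lambda>n. \<integral>x. pow32 (psum (\<lambda>j x. h (P (n + j) x)) (\<tau> x - n) x) \<partial>M) \<longlonglongrightarrow> 0"
    using nonneg conjunct2[OF bound] limit by (rule tendsto_zero_if_nonneg_le)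
qed

lemma tail_cube_tendsto_zero:
  assumes h: "h \<in> borel_measurable borel" and mean: "(\<integral>x. h (P 1 x) \<partial>M) = 0"
    and cube_int: "integrable M (\<lambda>x. \<bar>h (P 1 x)\<bar> ^ 3)" and tau_int: "integrable M (\<lambda>x. pow32 (real (\<tau> x)))"
  shows "integrable M (\<lambda>x. \<bar>psum (\<lambda>j x. h (P (n + j) x)) (\<tau> x - n) x\<bar> ^ 3)"
    and "(\<lambda>n. \<integral>x. \<bar>psum (\<lambda>j x. h (P (n + j) x)) (\<tau> x - n) x\<bar> ^ 3 \<partial>M) \<longlonglongrightarrow> 0"
proof -
  define K where "K = 2 * (6 * (\<integral>x. (h (P 1 x))\<^sup>2 \<partial>M) + 3 * (\<integral>x. \<bar>h (P 1 x)\<bar> ^ 3 \<partial>M)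
    + 3 * (\<integral>x. (h (P 1 x))\<^sup>2 \<partial>M) * (6 * (\<integral>x. (h (P 1 x))\<^sup>2 \<partial>M) + 1)\<^sup>2)"
  have powers: "(\<lambda>p. (h p)\<^sup>2) \<in> borel_measurable borel" "(\<lambda>p. \<bar>h p\<bar> ^ 3) \<in> borel_measurable borel"
    using h by measurable
  have shifted_moments: "(\<integral>x. h (P (n + 1) x) \<partial>M) = 0" "integrable M (\<lambda>x. \<bar>h (P (n + 1) x)\<bar> ^ 3)"
    "(\<integral>x. (h (P (n + 1) x))\<^sup>2 \<partial>M) = (\<integral>x. (h (P 1 x))\<^sup>2 \<partial>M)"
    "(\<integral>x. \<bar>h (P (n + 1) x)\<bar> ^ 3 \<partial>M) = (\<integral>x. \<bar>h (P 1 x)\<bar> ^ 3 \<partial>M)" for n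
    using integral_P_eq[of "n + 1" h] integral_P_eq[of "n + 1" "\<lambda>p. (h p)\<^sup>2"]
      integral_P_eq[of "n + 1" "\<lambda>p. \<bar>h p\<bar> ^ 3"] integrable_P_iff[of "n + 1" "\<lambda>p. \<bar>h p\<bar> ^ 3"]
      h powers mean cube_int by simp_all
  have tail_int: "integrable M (\<lambda>x. pow32 (real (\<tau> x - n)))" for n
    using tau_int by (rule Bochner_Integration.integrable_bound) (auto intro!: AE_I2 pow32_mono)
  have bound: "integrable M (\<lambda>x. \<bar>psum (\<lambda>j x. h (P (n + j) x)) (\<tau> x - n) x\<bar> ^ 3)
    \<and> (\<integral>x. \<bar>psum (\<lambda>j x. h (P (n + j) x)) (\<tau> x - n) x\<bar> ^ 3 \<partial>M) \<le> K * (\<integral>x. pow32 (real (\<tau> x - n)) \<partial>M)"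
    for n
  proof -
    interpret shifted: iid_adapted_walk M "\<lambda>j. F (n + j)" "\<lambda>j. P (n + j)" "\<lambda>x. \<tau> x - n"
      by (rule iid_adapted_walk_shift)
    show ?thesis
      using shifted.stopped_total_cube_bound[OF h shifted_moments(1,2) tail_int]
      unfolding shifted_moments(3,4) K_def by simp
  qed
  then show "integrable M (\<lambda>x. \<bar>psum (\<lambda>j x. h (P (n + j) x)) (\<tau> x - n) x\<bar> ^ 3)"
    by blast
  have "(\<lambda>n. \<integral>x. pow32 (real (\<tau> x - n)) \<partial>M) \<longlonglongrightarrow> 0"
    using tau_int
    by (intro tendsto_integral_tail_zero[where f="\<lambda>k. pow32 (real k)"]) (simp_all add: mono_def pow32_mono)
  then have limit: "(\<lambda>n. K * (\<integral>x. pow32 (real (\<tau> x - n)) \<partial>M)) \<longlonglongrightarrow> 0"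
    using tendsto_mult_left[of _ 0 sequentially K] by simp
  have nonneg: "0 \<le> (\<integral>x. \<bar>psum (\<lambda>j x. h (P (n + j) x)) (\<tau> x - n) x\<bar> ^ 3 \<partial>M)" for n
    by (simp add: integral_nonneg_AE)
  show "(\<lambda>n. \<integral>x. \<bar>psum (\<lambda>j x. h (P (n + j) x)) (\<tau> x - n) x\<bar> ^ 3 \<partial>M) \<longlonglongrightarrow> 0"
    using nonneg conjunct2[OF bound] limit by (rule tendsto_zero_if_nonneg_le)
qed

lemma tendsto_integral_stopped_sum_mult:
  assumes h: "h1 \<in> borel_measurable borel" "h2 \<in> borel_measurable borel"
    and mean: "(\<integral>x. h1 (P 1 x) \<partial>M) = 0" "(\<integral>x. h2 (P 1 x) \<partial>M) = 0"
    and moments: "integrable M (\<lambda>x. pow32 (h1 (P 1 x)))" "integrable M (\<lambda>x. \<bar>h2 (P 1 x)\<bar> ^ 3)"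
    and tau_int: "integrable M (\<lambda>x. pow32 (real (\<tau> x)))"
  shows "(\<lambda>n. \<integral>x. stopped_sum h1 n x * stopped_sum h2 n x \<partial>M)
    \<longlonglongrightarrow> (\<integral>x. psum (\<lambda>j x. h1 (P j x)) (\<tau> x) x * psum (\<lambda>j x. h2 (P j x)) (\<tau> x) x \<partial>M)"
proof -
  define Z1 Z2 where "Z1 x = psum (\<lambda>j x. h1 (P j x)) (\<tau> x) x" and "Z2 x = psum (\<lambda>j x. h2 (P j x)) (\<tau> x) x" for x
  define D1 D2 where "D1 n x = psum (\<lambda>j x. h1 (P (n + j) x)) (\<tau> x - n) x"
    and "D2 n x = psum (\<lambda>j x. h2 (P (n + j) x)) (\<tau> x - n) x" for n x
  note S1 = stopped_sum_pow32_bound[OF h(1) mean(1) moments(1)]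
    and S2 = integrable_stopped_sum_cube[OF h(2) moments(2)]
  note Z1 = stopped_total_pow32_bound[OF h(1) mean(1) moments(1) integrable_real_tau[OF tau_int], folded Z1_def]
    and Z2 = stopped_total_cube_bound[OF h(2) mean(2) moments(2) tau_int, folded Z2_def]
  note D1 = tail_pow32_tendsto_zero[OF h(1) mean(1) moments(1) integrable_real_tau[OF tau_int], folded D1_def]
    and D2 = tail_cube_tendsto_zero[OF h(2) mean(2) moments(2) tau_int, folded D2_def]
  have measurable: "Z1 \<in> borel_measurable M" "Z2 \<in> borel_measurable M"
    "D1 n \<in> borel_measurable M" "D2 n \<in> borel_measurable M"
    "stopped_sum h1 n \<in> borel_measurable M" "stopped_sum h2 n \<in> borel_measurable M" for n
    using P_measurable_M h stopped_sum_measurable_M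
    unfolding Z1_def[abs_def] Z2_def[abs_def] D1_def[abs_def] D2_def[abs_def]
    by (auto intro!: borel_measurable_psum_stopped)
  note uniform = stopped_sum_pow32_le_tau[OF h(1) mean(1) moments(1) integrable_real_tau[OF tau_int]]
  have cross: "(\<lambda>n. \<integral>x. D1 n x * Z2 x \<partial>M) \<longlonglongrightarrow> 0" "(\<lambda>n. \<integral>x. stopped_sum h1 n x * D2 n x \<partial>M) \<longlonglongrightarrow> 0"
    using measurable S1 S2 Z2 D1 D2 uniform by (intro tendsto_integral_mult_zero; auto)+
  have split:
    "Z1 x * Z2 x = D1 n x * Z2 x + stopped_sum h1 n x * D2 n x + stopped_sum h1 n x * stopped_sum h2 n x" for n x
    using psum_split_at[of _ "\<tau> x" x n] unfolding Z1_def Z2_def D1_def D2_def stopped_sum_def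
    by (simp add: algebra_simps)
  have "integrable M (\<lambda>x. D1 n x * Z2 x)" "integrable M (\<lambda>x. stopped_sum h1 n x * D2 n x)"
    "integrable M (\<lambda>x. stopped_sum h1 n x * stopped_sum h2 n x)" for n
    using measurable S1 S2 Z2 D1 D2 by (auto intro: integrable_mult_of_pow32_cube)
  then have "(\<integral>x. stopped_sum h1 n x * stopped_sum h2 n x \<partial>M)
      = (\<integral>x. Z1 x * Z2 x \<partial>M) - ((\<integral>x. D1 n x * Z2 x \<partial>M) + (\<integral>x. stopped_sum h1 n x * D2 n x \<partial>M))" for n
    unfolding split[of _ n] by simp
  moreover have "(\<lambda>n. (\<integral>x. Z1 x * Z2 x \<partial>M) - ((\<integral>x. D1 n x * Z2 x \<partial>M) + (\<integral>x. stopped_sum h1 n x * D2 n x \<partial>M)))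
      \<longlonglongrightarrow> (\<integral>x. Z1 x * Z2 x \<partial>M) - (0 + 0)"
    by (intro tendsto_intros cross)
  ultimately show ?thesis
    unfolding Z1_def Z2_def by simp
qed

theorem wald_product_identity:
  assumes h: "h1 \<in> borel_measurable borel" "h2 \<in> borel_measurable borel"
    and mean: "(\<integral>x. h1 (P 1 x) \<partial>M) = 0" "(\<integral>x. h2 (P 1 x) \<partial>M) = 0"
    and moments: "integrable M (\<lambda>x. pow32 (h1 (P 1 x)))" "integrable M (\<lambda>x. \<bar>h2 (P 1 x)\<bar> ^ 3)"
    and tau_int: "integrable M (\<lambda>x. pow32 (real (\<tau> x)))"
  shows "(\<integral>x. psum (\<lambda>j x. h1 (P j x)) (\<tau> x) x * psum (\<lambda>j x. h2 (P j x)) (\<tau> x) x \<partial>M)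
    = (\<integral>x. real (\<tau> x) \<partial>M) * (\<integral>x. h1 (P 1 x) * h2 (P 1 x) \<partial>M)"
proof -
  have tau: "integrable M (\<lambda>x. real (\<tau> x))"
    using tau_int by (rule integrable_real_tau)
  have "(\<lambda>n. (\<integral>x. real (\<tau> x) \<partial>M) - (\<integral>x. real (\<tau> x - n) \<partial>M)) \<longlonglongrightarrow> (\<integral>x. real (\<tau> x) \<partial>M) - 0"
    using tau
    by (intro tendsto_diff tendsto_const tendsto_integral_tail_zero[where f=real]) (simp_all add: mono_def)
  moreover have "(\<integral>x. real (min (\<tau> x) n) \<partial>M) = (\<integral>x. real (\<tau> x) \<partial>M) - (\<integral>x. real (\<tau> x - n) \<partial>M)" for n
  proof -
    have "integrable M (\<lambda>x. real (\<tau> x - n))"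
      using tau by (rule Bochner_Integration.integrable_bound) auto
    moreover have "(\<lambda>x. real (min (\<tau> x) n)) = (\<lambda>x. real (\<tau> x) - real (\<tau> x - n))"
      by (auto simp: min_def of_nat_diff)
    ultimately show ?thesis
      using tau by simp
  qed
  ultimately have "(\<lambda>n. \<integral>x. stopped_sum h1 n x * stopped_sum h2 n x \<partial>M)
      \<longlonglongrightarrow> (\<integral>x. real (\<tau> x) \<partial>M) * (\<integral>x. h1 (P 1 x) * h2 (P 1 x) \<partial>M)"
    unfolding integral_stopped_sum_mult[OF h mean moments] by (intro tendsto_mult_right) simp
  with tendsto_integral_stopped_sum_mult[OF h mean moments tau_int] show ?thesis
    by (rule LIMSEQ_unique)
qed

end

theorem lemma4p2:
  fixes M :: "'a measure" and F :: "nat \<Rightarrow> 'a measure"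
    and e1 e2 :: "nat \<Rightarrow> 'a \<Rightarrow> real" and t :: "'a \<Rightarrow> nat"
  assumes "prob_space M"
    and "filtration (space M) F"
    and "\<And>n. sets (F n) \<subseteq> sets M"
    and "indep_adapted M F (\<lambda>i x. (e1 i x, e2 i x))"
    and "prob_space.indep_vars M (\<lambda>_. borel) (\<lambda>i x. (e1 i x, e2 i x)) {1..}"
    and "\<And>i. i \<ge> 1 \<Longrightarrow> distr M borel (\<lambda>x. (e1 i x, e2 i x)) = distr M borel (\<lambda>x. (e1 1 x, e2 1 x))"
    and "integrable M (e1 1)" and "integrable M (e2 1)"
    and "integral\<^sup>L M (e1 1) = 0" and "integral\<^sup>L M (e2 1) = 0"
    and "stopping_time F t"
    and "integrable M (\<lambda>x. \<bar>e1 1 x\<bar> powr (3/2))"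
    and "integrable M (\<lambda>x. \<bar>e2 1 x\<bar> ^ 3)"
    and "integrable M (\<lambda>x. real (t x) powr (3/2))"
  shows "integral\<^sup>L M (\<lambda>x. psum e1 (t x) x * psum e2 (t x) x)
           = integral\<^sup>L M (\<lambda>x. real (t x)) * integral\<^sup>L M (\<lambda>x. e1 1 x * e2 1 x)"
proof -
  interpret iid_adapted_walk M F "\<lambda>i x. (e1 i x, e2 i x)" t
    by (rule iid_adapted_walk.intro[OF assms(1,2) iid_adapted_walk_axioms.intro[OF assms(3,4,6,11)]])
  have "fst \<in> borel_measurable (borel :: (real \<times> real) measure)"
    "snd \<in> borel_measurable (borel :: (real \<times> real) measure)"
    by (intro borel_measurable_continuous_onI continuous_intros)+
  moreover have "integrable M (\<lambda>x. pow32 (e1 1 x))" "integrable M (\<lambda>x. pow32 (real (t x)))"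
    using assms(12,14) by (simp_all add: pow32_eq_powr)
  ultimately show ?thesis
    using wald_product_identity[of fst snd] assms(9,10,13) by simp
qed

end
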